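(* Consider the state-dependent DMC with causal CSI at the transmitter described in the context. For every $R_K\geq 0$ and $B\geq 0$, the covert capacity with causal CSI satisfies $$C_{\mathrm{c}}\geq \max I(V;Y),$$ where the maximum is over PMFs $P_V$ on a finite set $\mathcal{V}$ with $|\mathcal{V}|\leq \min\{|\mathcal{X}|+|\mathcal{Y}|+|\mathcal{Z}|-1,\ (|\mathcal{X}|-1)\cdot|\mathcal{S}|+2\}$ and functions $x:\mathcal{V}\times\mathcal{S}\to\mathcal{X}$, evaluated under the joint distribution $P_S(s)P_V(v)\mathbbm{1}\{x=x(v,s)\}P_{Y,Z|S,X}(y,z|s,x)$, subject to $P_Z=Q_0$, $\mathrm{E}[b(X)]\leq B$, and $I(V;Z)-I(V;Y)<R_K$.
   Context: A state-dependent discrete memoryless channel consists of finite alphabets $\mathcal{X}$ (input), $\mathcal{S}$ (state), $\mathcal{Y}$ (receiver output), $\mathcal{Z}$ (warden output), a state PMF $P_S$, and a channel law $P_{Y,Z|S,X}$. Over $n$ uses, the state sequence $S^n$ is IID $\sim P_S$, and given $(X^n,S^n)$ the pairs $(Y_i,Z_i)$ are conditionally independent with law $P_{Y,Z|S,X}(\cdot,\cdot|S_i,X_i)$. A designated "no input" symbol $x_0\in\mathcal{X}$ is fixed, and $Q_0(z)=\sum_{s}P_S(s)P_{Z|S,X}(z|s,x_0)$; $Q_0^{\times n}$ is its $n$-fold product. It is assumed that $\mathrm{supp}(Q_0)=\mathcal{Z}$. A cost function $b:\mathcal{X}\to[0,\infty)$ is given, with $b(x^n)=\frac1n\sum_{i=1}^n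 b(x_i)$. A secret key $K$ uniform on $[1:2^{nR_K}]$ and a message $M$ uniform on $[1:2^{nR}]$ are mutually independent and independent of $S^n$; $K$ is known to transmitter and receiver, while $S^n$ is known only to the transmitter. With causal CSI, an $(2^{nR},2^{nR_K},n)$ code consists of an encoder producing $X_i$ as a function of $(M,K,S^i)$ (and possibly private randomness of the transmitter independent of $(M,K,S^n)$), $i\in[1:n]$, and a decoder mapping $(Y^n,K)$ to $\hat M$. With noncausal CSI, the encoder produces $X^n$ from $(M,K,S^n)$ (and possibly such private randomness). $P_e^{(n)}=P(\hat M\neq M)$, and $\widehat{P}_{Z^n}$ is the distribution of the warden's output $Z^n$ induced by the code. A rate $R$ is achievable (for given $R_K,B$) if there is a sequence of codes with $\limsup_{n}\mathrm{E}[b(X^n)]\leq B$, $P_e^{(n)}\to 0$, and $D(\widehat{P}_{Z^n}\|Q_0^{\times n})\to 0$. The covert capacity $C_{\mathrm{c}}$ (causal CSI) resp. $C_{\mathrm{nc}}$ (noncausal CSI) is the supremum of achievable rates. *)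

theory Defs
  imports Complex_Main "HOL-Library.Extended_Real" "HOL-Library.Liminf_Limsup"
begin

text \<open>Finite alphabets are finite types: 'x input, 's state, 'y receiver output,
  'z warden output.  The channel law is W s x y z = P_{Y,Z|S,X}(y,z|s,x).\<close>

definition is_pmf :: "('a \<Rightarrow> real) \<Rightarrow> 'a set \<Rightarrow> bool" where
  "is_pmf p A \<longleftrightarrow> finite A \<and> (\<forall>a\<in>A. p a \<ge> 0) \<and> (\<Sum>a\<in>A. p a) = 1"

definition is_channel ::
  "('s::finite \<Rightarrow> 'x::finite \<Rightarrow> 'y::finite \<Rightarrow> 'z::finite \<Rightarrow> real) \<Rightarrow> bool" where
  "is_channel W \<longleftrightarrow> (\<forall>s x y z. W s x y z \<ge> 0) \<and>
     (\<forall>s x. (\<Sum>y\<in>UNIV. \<Sum>z\<in>UNIV. W s x y z) = 1)"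

definition WY :: "('s \<Rightarrow> 'x \<Rightarrow> 'y \<Rightarrow> 'z::finite \<Rightarrow> real) \<Rightarrow> 's \<Rightarrow> 'x \<Rightarrow> 'y \<Rightarrow> real" where
  "WY W s x y = (\<Sum>z\<in>UNIV. W s x y z)"

definition WZ :: "('s \<Rightarrow> 'x \<Rightarrow> 'y::finite \<Rightarrow> 'z \<Rightarrow> real) \<Rightarrow> 's \<Rightarrow> 'x \<Rightarrow> 'z \<Rightarrow> real" where
  "WZ W s x z = (\<Sum>y\<in>UNIV. W s x y z)"

text \<open>No-input output distribution of the warden: Q_0(z) = sum_s P_S(s) P_{Z|S,X}(z|s,x_0).\<close>
definition Q0 :: "('s::finite \<Rightarrow> real) \<Rightarrow> ('s \<Rightarrow> 'x \<Rightarrow> 'y::finite \<Rightarrow> 'z \<Rightarrow> real) \<Rightarrow> 'x \<Rightarrow> 'z \<Rightarrow> real" where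
  "Q0 PS W x0 z = (\<Sum>s\<in>UNIV. PS s * WZ W s x0 z)"

definition seqs :: "nat \<Rightarrow> 'a list set" where
  "seqs n = {xs. length xs = n}"

definition prodn :: "nat \<Rightarrow> ('a \<Rightarrow> real) \<Rightarrow> 'a list \<Rightarrow> real" where
  "prodn n p xs = (\<Prod>i<n. p (xs ! i))"

definition rel_entropy :: "'a set \<Rightarrow> ('a \<Rightarrow> real) \<Rightarrow> ('a \<Rightarrow> real) \<Rightarrow> real" where
  "rel_entropy A P Q = (\<Sum>a\<in>A. if P a = 0 then 0 else P a * log 2 (P a / Q a))"

definition mutual_info :: "'a set \<Rightarrow> 'b set \<Rightarrow> ('a \<Rightarrow> 'b \<Rightarrow> real) \<Rightarrow> real" where
  "mutual_info A B p =
     (\<Sum>a\<in>A. \<Sum>b\<in>B. if p a b = 0 then 0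
        else p a b * log 2 (p a b / ((\<Sum>b'\<in>B. p a b') * (\<Sum>a'\<in>A. p a' b))))"

definition num_msgs :: "nat \<Rightarrow> real \<Rightarrow> nat" where
  "num_msgs n R = nat \<lceil>2 powr (real n * R)\<rceil>"

definition num_keys :: "nat \<Rightarrow> real \<Rightarrow> nat" where
  "num_keys n RK = nat \<lfloor>2 powr (real n * RK)\<rfloor>"

text \<open>The transmitter's private randomness is U in
  {0..<rand_size} with PMF rand_pmf (independent of M, K, S^n).  The encoder
  produces X_i = enc u i m k (S^i) (time index i from 0, S^i = first i+1 states);
  the decoder maps (Y^n, K) to the message estimate.  Messages are m in
  {0..<num_msgs n R}, keys k in {0..<num_keys n RK}.\<close>
record ('s, 'x, 'y) causal_code =
  rand_size :: nat
  rand_pmf :: "nat \<Rightarrow> real"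
  enc :: "nat \<Rightarrow> nat \<Rightarrow> nat \<Rightarrow> nat \<Rightarrow> 's list \<Rightarrow> 'x"
  dec :: "'y list \<Rightarrow> nat \<Rightarrow> nat"

definition code_ok :: "('s, 'x, 'y) causal_code \<Rightarrow> bool" where
  "code_ok c \<longleftrightarrow> is_pmf (rand_pmf c) {0..<rand_size c}"

definition cinput :: "('s, 'x, 'y) causal_code \<Rightarrow> nat \<Rightarrow> nat \<Rightarrow> nat \<Rightarrow> nat \<Rightarrow> 's list \<Rightarrow> 'x list" where
  "cinput c n u m k s = map (\<lambda>i. enc c u i m k (take (Suc i) s)) [0..<n]"

definition cweight :: "('s \<Rightarrow> real) \<Rightarrow> ('s, 'x, 'y) causal_code \<Rightarrow> nat \<Rightarrow> nat \<Rightarrow> nat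
     \<Rightarrow> nat \<Rightarrow> nat \<Rightarrow> nat \<Rightarrow> 's list \<Rightarrow> real" where
  "cweight PS c n Mn Kn u m k s = rand_pmf c u * prodn n PS s / (real Mn * real Kn)"

definition err_prob :: "('s::finite \<Rightarrow> real) \<Rightarrow> ('s \<Rightarrow> 'x \<Rightarrow> 'y::finite \<Rightarrow> 'z::finite \<Rightarrow> real)
     \<Rightarrow> nat \<Rightarrow> real \<Rightarrow> real \<Rightarrow> ('s, 'x, 'y) causal_code \<Rightarrow> real" where
  "err_prob PS W n R RK c =
    (let Mn = num_msgs n R; Kn = num_keys n RK in
     \<Sum>m<Mn. \<Sum>k<Kn. \<Sum>u<rand_size c. \<Sum>s\<in>seqs n.
       cweight PS c n Mn Kn u m k s *
       (\<Sum>y\<in>seqs n. (\<Prod>i<n. WY W (s ! i) (cinput c n u m k s ! i) (y ! i)) *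
           (if dec c y k \<noteq> m then 1 else 0)))"

definition exp_cost :: "('s::finite \<Rightarrow> real) \<Rightarrow> ('x \<Rightarrow> real)
     \<Rightarrow> nat \<Rightarrow> real \<Rightarrow> real \<Rightarrow> ('s, 'x, 'y) causal_code \<Rightarrow> real" where
  "exp_cost PS b n R RK c =
    (let Mn = num_msgs n R; Kn = num_keys n RK in
     \<Sum>m<Mn. \<Sum>k<Kn. \<Sum>u<rand_size c. \<Sum>s\<in>seqs n.
       cweight PS c n Mn Kn u m k s *
       ((\<Sum>i<n. b (cinput c n u m k s ! i)) / real n))"

definition warden_dist :: "('s::finite \<Rightarrow> real) \<Rightarrow> ('s \<Rightarrow> 'x \<Rightarrow> 'y::finite \<Rightarrow> 'z \<Rightarrow> real)
     \<Rightarrow> nat \<Rightarrow> real \<Rightarrow> real \<Rightarrow> ('s, 'x, 'y) causal_code \<Rightarrow> 'z list \<Rightarrow> real" where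
  "warden_dist PS W n R RK c zs =
    (let Mn = num_msgs n R; Kn = num_keys n RK in
     \<Sum>m<Mn. \<Sum>k<Kn. \<Sum>u<rand_size c. \<Sum>s\<in>seqs n.
       cweight PS c n Mn Kn u m k s *
       (\<Prod>i<n. WZ W (s ! i) (cinput c n u m k s ! i) (zs ! i)))"

definition achievable_causal ::
  "('s::finite \<Rightarrow> real) \<Rightarrow> ('s \<Rightarrow> 'x::finite \<Rightarrow> 'y::finite \<Rightarrow> 'z::finite \<Rightarrow> real) \<Rightarrow> 'x
     \<Rightarrow> ('x \<Rightarrow> real) \<Rightarrow> real \<Rightarrow> real \<Rightarrow> real \<Rightarrow> bool" where
  "achievable_causal PS W x0 b RK B R \<longleftrightarrow>
    (\<exists>C :: nat \<Rightarrow> ('s, 'x, 'y) causal_code.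
       (\<forall>n. code_ok (C n)) \<and>
       limsup (\<lambda>n. ereal (exp_cost PS b n R RK (C n))) \<le> ereal B \<and>
       (\<lambda>n. err_prob PS W n R RK (C n)) \<longlonglongrightarrow> 0 \<and>
       (\<lambda>n. rel_entropy (seqs n) (warden_dist PS W n R RK (C n))
                 (prodn n (Q0 PS W x0))) \<longlonglongrightarrow> 0)"

definition covert_capacity_causal ::
  "('s::finite \<Rightarrow> real) \<Rightarrow> ('s \<Rightarrow> 'x::finite \<Rightarrow> 'y::finite \<Rightarrow> 'z::finite \<Rightarrow> real) \<Rightarrow> 'x
     \<Rightarrow> ('x \<Rightarrow> real) \<Rightarrow> real \<Rightarrow> real \<Rightarrow> ereal" where
  "covert_capacity_causal PS W x0 b RK B =
     Sup (ereal ` {R. achievable_causal PS W x0 b RK B R})"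

text \<open>Single-letter joint laws for (V,Y) and (V,Z) induced by
  P_S(s) P_V(v) 1{x = xf v s} P_{Y,Z|S,X}(y,z|s,x).\<close>
definition PVY :: "('s::finite \<Rightarrow> real) \<Rightarrow> ('s \<Rightarrow> 'x \<Rightarrow> 'y \<Rightarrow> 'z::finite \<Rightarrow> real)
     \<Rightarrow> ('v \<Rightarrow> real) \<Rightarrow> ('v \<Rightarrow> 's \<Rightarrow> 'x) \<Rightarrow> 'v \<Rightarrow> 'y \<Rightarrow> real" where
  "PVY PS W PV xf v y = (\<Sum>s\<in>UNIV. PS s * PV v * WY W s (xf v s) y)"

definition PVZ :: "('s::finite \<Rightarrow> real) \<Rightarrow> ('s \<Rightarrow> 'x \<Rightarrow> 'y::finite \<Rightarrow> 'z \<Rightarrow> real)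
     \<Rightarrow> ('v \<Rightarrow> real) \<Rightarrow> ('v \<Rightarrow> 's \<Rightarrow> 'x) \<Rightarrow> 'v \<Rightarrow> 'z \<Rightarrow> real" where
  "PVZ PS W PV xf v z = (\<Sum>s\<in>UNIV. PS s * PV v * WZ W s (xf v s) z)"

end

theory Submission
  imports Defs
begin

text \<open>Random coding with Shannon strategies. Every key-message pair gets a codeword drawn
  i.i.d. from P_V, and the transmitter sends x(v_i, S_i), which turns the channel into a
  memoryless channel from V to (Y, Z). A threshold decoder on the information density fails with
  probability at most P(atypical) + 2^(n (R - \<gamma>)), which vanishes for R < \<gamma> < I(V;Y). The warden
  sees a uniform mixture of the outputs of all 2^(n (R + R_K)) codewords, whose divergence from
  Q_0^n is exponentially small once R + R_K > I(V;Z) (soft covering), and a Chernoff bound controls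
  the cost. All three bounds hold on average over the codebook, so one codebook meets them
  simultaneously. Hence every rate between max (I(V;Z) - R_K) 0 and I(V;Y) is achievable; if there
  is no such rate, then I(V;Y) \<le> 0 and rate 0 is achievable.\<close>

section \<open>Expectations over i.i.d. sequences\<close>

definition lists_of_length :: "'a set \<Rightarrow> nat \<Rightarrow> 'a list set" where
  "lists_of_length A n = {xs. length xs = n \<and> set xs \<subseteq> A}"

lemma finite_lists_of_length: "finite A \<Longrightarrow> finite (lists_of_length A n)"
  using finite_lists_length_eq[of A n] unfolding lists_of_length_def by (simp add: conj_commute)

lemma lists_of_length_Suc:
  "lists_of_length A (Suc n) = (\<lambda>(a, xs). a # xs) ` (A \<times> lists_of_length A n)"
  unfolding lists_of_length_def by (auto simp: length_Suc_conv image_iff)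

lemma nth_in_lists_of_length: "xs \<in> lists_of_length A n \<Longrightarrow> i < n \<Longrightarrow> xs ! i \<in> A"
  unfolding lists_of_length_def by auto

lemma seqs_eq_lists_of_length: "seqs n = lists_of_length UNIV n"
  unfolding seqs_def lists_of_length_def by auto

lemma finite_seqs: "finite (seqs n :: 'a::finite list set)"
  unfolding seqs_eq_lists_of_length by (rule finite_lists_of_length) simp

lemma sum_prod_lists_of_length:
  fixes f :: "nat \<Rightarrow> 'a \<Rightarrow> 'b::comm_semiring_1"
  assumes "finite A"
  shows "(\<Sum>xs\<in>lists_of_length A n. \<Prod>i<n. f i (xs ! i)) = (\<Prod>i<n. \<Sum>a\<in>A. f i a)"
  using assms
proof (induction n arbitrary: f)
  case 0
  have "lists_of_length A 0 = {[]}" by (auto simp: lists_of_length_def)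
  then show ?case by simp
next
  case (Suc n)
  have inj: "inj_on (\<lambda>(a, xs). a # xs) (A \<times> lists_of_length A n)" by (auto simp: inj_on_def)
  have "(\<Sum>xs\<in>lists_of_length A (Suc n). \<Prod>i<Suc n. f i (xs ! i))
      = (\<Sum>(a, xs)\<in>A \<times> lists_of_length A n. f 0 a * (\<Prod>i<n. f (Suc i) (xs ! i)))"
    unfolding lists_of_length_Suc
    by (subst sum.reindex[OF inj]) (simp add: case_prod_beta prod.lessThan_Suc_shift del: prod.lessThan_Suc)
  also have "\<dots> = (\<Sum>a\<in>A. f 0 a * (\<Sum>xs\<in>lists_of_length A n. \<Prod>i<n. f (Suc i) (xs ! i)))"
    by (simp add: sum.cartesian_product[symmetric] sum_distrib_left)
  also have "\<dots> = (\<Sum>a\<in>A. f 0 a) * (\<Prod>i<n. \<Sum>a\<in>A. f (Suc i) a)"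
    using Suc.IH[of "\<lambda>i. f (Suc i)", OF Suc.prems] by (simp add: sum_distrib_right)
  also have "\<dots> = (\<Prod>i<Suc n. \<Sum>a\<in>A. f i a)"
    by (simp add: prod.lessThan_Suc_shift del: prod.lessThan_Suc)
  finally show ?case .
qed

lemma sum_lists_of_length_pairs:
  "(\<Sum>v\<in>lists_of_length A n. \<Sum>y\<in>lists_of_length B n. F v y)
     = (\<Sum>w\<in>lists_of_length (A \<times> B) n. F (map fst w) (map snd w))"
proof -
  have "(\<Sum>v\<in>lists_of_length A n. \<Sum>y\<in>lists_of_length B n. F v y)
      = (\<Sum>(v, y)\<in>lists_of_length A n \<times> lists_of_length B n. F v y)"
    by (rule sum.cartesian_product)
  also have "\<dots> = (\<Sum>w\<in>lists_of_length (A \<times> B) n. F (map fst w) (map snd w))"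
  proof (rule sum.reindex_bij_witness[where i="\<lambda>w. (map fst w, map snd w)" and j="\<lambda>(v, y). zip v y"])
    fix w assume "w \<in> lists_of_length (A \<times> B) n"
    then show "(map fst w, map snd w) \<in> lists_of_length A n \<times> lists_of_length B n"
      by (force simp: lists_of_length_def)
  next
    fix vy assume "vy \<in> lists_of_length A n \<times> lists_of_length B n"
    then obtain v y where vy: "vy = (v, y)" "length v = n" "length y = n" "set v \<subseteq> A" "set y \<subseteq> B"
      by (auto simp: lists_of_length_def)
    then show "(map fst (case vy of (v, y) \<Rightarrow> zip v y), map snd (case vy of (v, y) \<Rightarrow> zip v y)) = vy"
      by simp
    show "(case vy of (v, y) \<Rightarrow> zip v y) \<in> lists_of_length (A \<times> B) n"
      using vy by (auto simp: lists_of_length_def dest: set_zip_leftD set_zip_rightD)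
  qed (auto simp: lists_of_length_def zip_map_fst_snd)
  finally show ?thesis .
qed

definition iid_expectation :: "'a set \<Rightarrow> ('a \<Rightarrow> real) \<Rightarrow> nat \<Rightarrow> ('a list \<Rightarrow> real) \<Rightarrow> real" where
  "iid_expectation A p n f = (\<Sum>xs\<in>lists_of_length A n. (\<Prod>i<n. p (xs ! i)) * f xs)"

lemma iid_expectation_eq_prodn: "iid_expectation A p n f = (\<Sum>xs\<in>lists_of_length A n. prodn n p xs * f xs)"
  unfolding iid_expectation_def prodn_def ..

lemma iid_expectation_add:
  "iid_expectation A p n (\<lambda>xs. f xs + g xs) = iid_expectation A p n f + iid_expectation A p n g"
  unfolding iid_expectation_def by (simp add: distrib_left sum.distrib)

lemma iid_expectation_diff:
  "iid_expectation A p n (\<lambda>xs. f xs - g xs) = iid_expectation A p n f - iid_expectation A p n g"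
  unfolding iid_expectation_def by (simp add: right_diff_distrib sum_subtractf)

lemma iid_expectation_cmult:
  "iid_expectation A p n (\<lambda>xs. c * f xs) = c * iid_expectation A p n f"
  unfolding iid_expectation_def by (simp add: sum_distrib_left ac_simps)

lemma iid_expectation_divide:
  "iid_expectation A p n (\<lambda>xs. f xs / c) = iid_expectation A p n f / c"
  unfolding iid_expectation_def by (simp add: sum_divide_distrib)

lemma iid_expectation_sum:
  "finite I \<Longrightarrow> iid_expectation A p n (\<lambda>xs. \<Sum>i\<in>I. f i xs) = (\<Sum>i\<in>I. iid_expectation A p n (f i))"
  unfolding iid_expectation_def by (simp add: sum_distrib_left sum.swap[of _ I])

lemma iid_expectation_mono:
  assumes "\<And>a. a \<in> A \<Longrightarrow> p a \<ge> 0" and "\<And>xs. xs \<in> lists_of_length A n \<Longrightarrow> f xs \<le> g xs"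
  shows "iid_expectation A p n f \<le> iid_expectation A p n g"
  unfolding iid_expectation_def
  using assms by (intro sum_mono mult_left_mono prod_nonneg) (auto intro: nth_in_lists_of_length)

lemma iid_expectation_coordinates:
  assumes A: "finite A" and p: "sum p A = 1" and J: "J \<subseteq> {..<n}"
  shows "iid_expectation A p n (\<lambda>xs. \<Prod>i\<in>J. \<phi> i (xs ! i)) = (\<Prod>i\<in>J. \<Sum>a\<in>A. p a * \<phi> i a)"
proof -
  let ?f = "\<lambda>i a. p a * (if i \<in> J then \<phi> i a else 1)"
  have restrict: "(\<Prod>i<n. if i \<in> J then g i else 1) = prod g J" for g :: "nat \<Rightarrow> real"
    using J by (simp add: prod.If_cases Int_absorb1)
  have "iid_expectation A p n (\<lambda>xs. \<Prod>i\<in>J. \<phi> i (xs ! i))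
      = (\<Sum>xs\<in>lists_of_length A n. \<Prod>i<n. ?f i (xs ! i))"
    unfolding iid_expectation_def prod.distrib restrict[symmetric] by (simp add: if_distrib)
  also have "\<dots> = (\<Prod>i<n. \<Sum>a\<in>A. ?f i a)"
    by (rule sum_prod_lists_of_length[OF A])
  also have "\<dots> = (\<Prod>i<n. if i \<in> J then \<Sum>a\<in>A. p a * \<phi> i a else 1)"
    using p by (intro prod.cong) auto
  finally show ?thesis by (simp add: restrict)
qed

lemma iid_expectation_const:
  assumes "finite A" "sum p A = 1"
  shows "iid_expectation A p n (\<lambda>xs. c) = c"
  using iid_expectation_coordinates[OF assms, of "{}" n] iid_expectation_cmult[of A p n c "\<lambda>_. 1"]
  by simp

lemma iid_expectation_nth:
  assumes "finite A" "sum p A = 1" "j < n"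
  shows "iid_expectation A p n (\<lambda>xs. \<phi> (xs ! j)) = (\<Sum>a\<in>A. p a * \<phi> a)"
  using iid_expectation_coordinates[OF assms(1,2), of "{j}" n "\<lambda>_. \<phi>"] assms(3) by simp

lemma iid_expectation_nth_nth:
  assumes "finite A" "sum p A = 1" "j < n" "j' < n" "j \<noteq> j'"
  shows "iid_expectation A p n (\<lambda>xs. \<phi> (xs ! j) * \<psi> (xs ! j'))
           = (\<Sum>a\<in>A. p a * \<phi> a) * (\<Sum>a\<in>A. p a * \<psi> a)"
  using iid_expectation_coordinates[OF assms(1,2), of "{j, j'}" n "\<lambda>i. if i = j then \<phi> else \<psi>"] assms(3-)
  by simp

lemma iid_expectation_pairs:
  "iid_expectation A p n (\<lambda>v. \<Sum>y\<in>lists_of_length B n. (\<Prod>i<n. q (v ! i) (y ! i)) * g v y)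
     = iid_expectation (A \<times> B) (\<lambda>(a, c). p a * q a c) n (\<lambda>w. g (map fst w) (map snd w))"
proof -
  have "iid_expectation A p n (\<lambda>v. \<Sum>y\<in>lists_of_length B n. (\<Prod>i<n. q (v ! i) (y ! i)) * g v y)
      = (\<Sum>v\<in>lists_of_length A n. \<Sum>y\<in>lists_of_length B n.
           (\<Prod>i<n. p (v ! i) * q (v ! i) (y ! i)) * g v y)"
    unfolding iid_expectation_def by (simp add: sum_distrib_left prod.distrib ac_simps)
  also have "\<dots> = iid_expectation (A \<times> B) (\<lambda>(a, c). p a * q a c) n (\<lambda>w. g (map fst w) (map snd w))"
    unfolding sum_lists_of_length_pairs iid_expectation_def
  proof (intro sum.cong refl arg_cong2[where f = "(*)"] prod.cong)
    fix w i assume "w \<in> lists_of_length (A \<times> B) n" "i \<in> {..<n}"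
    then have "i < length w" by (simp add: lists_of_length_def)
    then show "p (map fst w ! i) * q (map fst w ! i) (map snd w ! i) = (case w ! i of (a, c) \<Rightarrow> p a * q a c)"
      by (simp add: case_prod_beta)
  qed
  finally show ?thesis .
qed

lemma exists_le_weighted_mean:
  fixes p f :: "'a \<Rightarrow> real"
  assumes A: "finite A" and p0: "\<And>a. a \<in> A \<Longrightarrow> p a \<ge> 0" and p1: "sum p A = 1"
  shows "\<exists>a\<in>A. f a \<le> (\<Sum>a\<in>A. p a * f a)"
proof (rule ccontr)
  assume "\<not> ?thesis"
  then have less: "(\<Sum>a\<in>A. p a * f a) < f a" if "a \<in> A" for a
    using that by auto
  have "\<exists>a\<in>A. p a \<noteq> 0"
    using p1 by (metis sum.neutral zero_neq_one)
  then obtain a1 where a1: "a1 \<in> A" "p a1 > 0"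
    using p0 by (auto simp: less_le)
  have "(\<Sum>a\<in>A. p a * (\<Sum>a\<in>A. p a * f a)) < (\<Sum>a\<in>A. p a * f a)"
    using less p0 a1 A
    by (intro sum_strict_mono_ex1) (auto intro: mult_left_mono mult_strict_left_mono less_imp_le)
  then show False using p1 by (simp add: sum_distrib_right[symmetric])
qed

lemma exists_le_iid_expectation:
  assumes A: "finite A" and p0: "\<And>a. a \<in> A \<Longrightarrow> p a \<ge> 0" and p1: "sum p A = 1"
  shows "\<exists>xs\<in>lists_of_length A n. f xs \<le> iid_expectation A p n f"
  unfolding iid_expectation_def
proof (rule exists_le_weighted_mean)
  show "sum (\<lambda>xs. \<Prod>i<n. p (xs ! i)) (lists_of_length A n) = 1"
    using iid_expectation_const[OF A p1, of n 1] by (simp add: iid_expectation_def)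
qed (use A p0 in \<open>auto intro!: prod_nonneg finite_lists_of_length nth_in_lists_of_length\<close>)

lemma iid_expectation_chernoff:
  assumes A: "finite A" and p0: "\<And>a. a \<in> A \<Longrightarrow> p a \<ge> 0" and K: "K \<ge> 0"
    and g: "\<And>xs. xs \<in> lists_of_length A n \<Longrightarrow> (\<forall>i<n. p (xs ! i) > 0)
              \<Longrightarrow> g xs \<le> K * exp (t * (\<Sum>i<n. c (xs ! i)))"
  shows "iid_expectation A p n g \<le> K * (\<Sum>a\<in>A. p a * exp (t * c a)) ^ n"
proof -
  let ?h = "\<lambda>a. p a * exp (t * c a)"
  have "(\<Prod>i<n. p (xs ! i)) * g xs \<le> K * (\<Prod>i<n. ?h (xs ! i))"
    if xs: "xs \<in> lists_of_length A n" for xs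
  proof -
    have pxs: "p (xs ! i) \<ge> 0" if "i < n" for i
      using p0 nth_in_lists_of_length[OF xs that] .
    have rhs: "K * (\<Prod>i<n. ?h (xs ! i)) = (\<Prod>i<n. p (xs ! i)) * (K * exp (t * (\<Sum>i<n. c (xs ! i))))"
      by (simp add: prod.distrib exp_sum sum_distrib_left)
    show ?thesis
    proof (cases "\<forall>i<n. p (xs ! i) > 0")
      case True
      then show ?thesis
        unfolding rhs using g[OF xs True] pxs by (intro mult_left_mono prod_nonneg) auto
    next
      case False
      then obtain i where "i < n" "p (xs ! i) = 0"
        using pxs by (auto simp: less_le)
      then have "(\<Prod>i<n. p (xs ! i)) = 0"
        by (intro prod_zero) auto
      moreover have "0 \<le> K * (\<Prod>i<n. ?h (xs ! i))"
        using K pxs by (intro mult_nonneg_nonneg prod_nonneg) auto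
      ultimately show ?thesis by (metis mult_zero_left)
    qed
  qed
  then have "iid_expectation A p n g \<le> (\<Sum>xs\<in>lists_of_length A n. K * (\<Prod>i<n. ?h (xs ! i)))"
    unfolding iid_expectation_def by (rule sum_mono)
  also have "\<dots> = K * (\<Sum>a\<in>A. ?h a) ^ n"
    using sum_prod_lists_of_length[OF A, of "\<lambda>_. ?h" n] by (simp add: sum_distrib_left[symmetric])
  finally show ?thesis .
qed

lemma exp_moment_lt_one:
  fixes p c :: "'a \<Rightarrow> real"
  assumes A: "finite A" and p1: "sum p A = 1" and neg: "(\<Sum>a\<in>A. p a * c a) < 0"
  shows "\<exists>d>0. \<forall>t. 0 < t \<and> t < d \<longrightarrow> (\<Sum>a\<in>A. p a * exp (t * c a)) < 1"
proof -
  let ?h = "\<lambda>t. \<Sum>a\<in>A. p a * exp (t * c a)"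
  have "DERIV ?h 0 :> (\<Sum>a\<in>A. p a * c a)"
    by (auto intro!: derivative_eq_intros simp: mult.commute)
  from DERIV_neg_dec_right[OF this neg] obtain d where "d > 0" "\<forall>t>0. t < d \<longrightarrow> ?h 0 > ?h (0 + t)"
    by auto
  then show ?thesis using p1 by (intro exI[of _ d]) auto
qed

lemma iid_expectation_exponential_decay:
  assumes A: "finite A" and p0: "\<And>a. a \<in> A \<Longrightarrow> p a \<ge> 0" and p1: "sum p A = 1"
    and neg: "(\<Sum>a\<in>A. p a * c a) < 0" and K: "\<And>t. 0 < t \<Longrightarrow> K t \<ge> 0"
    and g: "\<And>t n xs. 0 < t \<Longrightarrow> t \<le> 1 \<Longrightarrow> xs \<in> lists_of_length A n \<Longrightarrow> \<forall>i<n. p (xs ! i) > 0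
              \<Longrightarrow> g n xs \<le> K t * exp (t * (\<Sum>i<n. c (xs ! i)))"
  shows "\<exists>t \<rho>. 0 < t \<and> 0 \<le> \<rho> \<and> \<rho> < 1 \<and> (\<forall>n. iid_expectation A p n (g n) \<le> K t * \<rho> ^ n)"
proof -
  obtain d where d: "d > 0" "\<forall>t. 0 < t \<and> t < d \<longrightarrow> (\<Sum>a\<in>A. p a * exp (t * c a)) < 1"
    using exp_moment_lt_one[OF A p1 neg] by auto
  define t where "t = min (d / 2) 1"
  have t: "0 < t" "t \<le> 1" "t < d" using d(1) by (auto simp: t_def)
  define \<rho> where "\<rho> = (\<Sum>a\<in>A. p a * exp (t * c a))"
  have "\<rho> < 1" using d(2) t by (simp add: \<rho>_def)
  moreover have "\<rho> \<ge> 0" unfolding \<rho>_def using p0 by (intro sum_nonneg) auto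
  moreover have "iid_expectation A p n (g n) \<le> K t * \<rho> ^ n" for n
    unfolding \<rho>_def by (rule iid_expectation_chernoff[OF A p0 K[OF t(1)] g[OF t(1,2)]])
  ultimately show ?thesis using t(1) by blast
qed

section \<open>Inequalities for logarithms and information measures\<close>

lemma ln_le_ln_add_div_minus_one:
  fixes x y :: real
  assumes "x > 0" "y > 0"
  shows "ln x \<le> ln y + x / y - 1"
  using ln_le_minus_one[of "x / y"] ln_divide_pos[OF assms] assms by simp

lemma ln_one_plus_le_powr_div:
  fixes x r :: real
  assumes x: "x \<ge> 0" and r: "0 < r" "r \<le> 1"
  shows "ln (1 + x) \<le> x powr r / r"
proof (cases "x \<le> 1")
  case True
  have "ln (1 + x) \<le> x" using x by (intro ln_add_one_self_le_self)
  also have "x \<le> x powr r"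
  proof (cases "x = 0")
    case False
    then have "x powr 1 \<le> x powr r" using True x r by (intro powr_mono') auto
    then show ?thesis using False x by simp
  qed simp
  also have "x powr r \<le> x powr r / r" using r by (simp add: le_divide_eq mult_left_le)
  finally show ?thesis .
next
  case False
  then have x1: "x > 1" by simp
  have "ln (1 + x) \<le> ln (2 * x)" using x1 by simp
  also have "\<dots> = ln 2 + ln x" using x1 by (simp add: ln_mult)
  also have "ln x = ln (x powr r) / r" using x1 r by (simp add: ln_powr)
  also have "ln (x powr r) / r \<le> (x powr r - 1) / r"
    using x1 r by (intro divide_right_mono ln_le_minus_one) auto
  also have "ln 2 + (x powr r - 1) / r \<le> x powr r / r"
  proof -
    have "r * ln 2 \<le> 1" using ln_2_less_1 r by (intro mult_le_one) auto
    then have "ln 2 \<le> 1 / r" using r by (simp add: field_simps)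
    then show ?thesis by (simp add: diff_divide_distrib)
  qed
  finally show ?thesis by simp
qed

lemma ln_one_plus_le_exp:
  fixes x r L :: real
  assumes x: "x > 0" and r: "0 < r" "r \<le> 1" and L: "ln x \<le> L + ln 2"
  shows "ln (1 + x) \<le> 2 / r * exp (r * L)"
proof -
  have "ln (1 + x) \<le> x powr r / r"
    using x r by (intro ln_one_plus_le_powr_div) auto
  also have "x powr r = exp (r * ln x)"
    using x by (simp add: powr_def mult.commute)
  also have "\<dots> \<le> exp (r * L) * exp (r * ln 2)"
    using L r by (simp add: exp_add[symmetric] distrib_left[symmetric])
  also have "exp (r * ln 2) \<le> 2"
  proof -
    have "r * ln 2 \<le> ln 2" using r by (simp add: mult_le_cancel_right1)
    then show ?thesis by (metis exp_le_cancel_iff exp_ln zero_less_numeral)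
  qed
  finally show ?thesis
    using r by (simp add: divide_right_mono mult.commute)
qed

lemma ln_average_le:
  fixes a S N :: real
  assumes a: "0 < a" "a \<le> S" and N: "N \<ge> 1"
  shows "ln (S / N) \<le> ln (1 + a / N) + S / (a + N - 1) - 1"
proof -
  have Y: "(a + N - 1) / N > 0" using a N by simp
  have "ln (S / N) \<le> ln ((a + N - 1) / N) + (S / N) / ((a + N - 1) / N) - 1"
    using a N Y by (intro ln_le_ln_add_div_minus_one) auto
  also have "ln ((a + N - 1) / N) \<le> ln (1 + a / N)"
    using Y N by (subst ln_le_cancel_iff) (auto simp: field_simps)
  also have "(S / N) / ((a + N - 1) / N) = S / (a + N - 1)"
    using N by simp
  finally show ?thesis by simp
qed

lemma rel_entropy_nonneg:
  assumes A: "finite A" and P0: "\<And>a. a \<in> A \<Longrightarrow> P a \<ge> 0" and Q0: "\<And>a. a \<in> A \<Longrightarrow> Q a > 0"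
    and P1: "sum P A = 1" and Q1: "sum Q A = 1"
  shows "rel_entropy A P Q \<ge> 0"
proof -
  have "(P a - Q a) / ln 2 \<le> (if P a = 0 then 0 else P a * log 2 (P a / Q a))" if a: "a \<in> A" for a
  proof (cases "P a = 0")
    case True then show ?thesis using Q0[OF a] by simp
  next
    case False
    then have Pa: "P a > 0" using P0[OF a] by simp
    have "1 - Q a / P a \<le> ln (P a / Q a)"
      using ln_le_minus_one[of "Q a / P a"] Pa Q0[OF a] by (simp add: ln_div)
    then have "P a * (1 - Q a / P a) \<le> P a * ln (P a / Q a)"
      using Pa by (intro mult_left_mono) auto
    then have "P a - Q a \<le> P a * ln (P a / Q a)"
      using Pa by (simp add: algebra_simps)
    then show ?thesis using False by (simp add: log_def divide_right_mono)
  qed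
  then have "(\<Sum>a\<in>A. (P a - Q a) / ln 2) \<le> rel_entropy A P Q"
    unfolding rel_entropy_def by (rule sum_mono)
  moreover have "(\<Sum>a\<in>A. (P a - Q a) / ln 2) = 0"
    by (simp add: sum_divide_distrib[symmetric] sum_subtractf P1 Q1)
  ultimately show ?thesis by simp
qed

lemma ln2_mutual_info_eq:
  assumes A: "finite A" and B: "finite B" and Pa: "\<And>a. a \<in> A \<Longrightarrow> Pa a \<ge> 0"
    and K0: "\<And>a b. a \<in> A \<Longrightarrow> K a b \<ge> 0" and K1: "\<And>a. a \<in> A \<Longrightarrow> sum (K a) B = 1"
  shows "ln 2 * mutual_info A B (\<lambda>a b. Pa a * K a b)
       = (\<Sum>a\<in>A. \<Sum>b\<in>B. Pa a * K a b * (ln (K a b) - ln (\<Sum>a'\<in>A. Pa a' * K a' b)))"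
proof -
  have "mutual_info A B (\<lambda>a b. Pa a * K a b)
      = (\<Sum>a\<in>A. \<Sum>b\<in>B. Pa a * K a b * (ln (K a b) - ln (\<Sum>a'\<in>A. Pa a' * K a' b)) / ln 2)"
    unfolding mutual_info_def
  proof (intro sum.cong refl)
    fix a b assume a: "a \<in> A" and b: "b \<in> B"
    let ?q = "\<Sum>a'\<in>A. Pa a' * K a' b"
    have row: "(\<Sum>b'\<in>B. Pa a * K a b') = Pa a"
      using K1[OF a] by (simp add: sum_distrib_left[symmetric])
    show "(if Pa a * K a b = 0 then 0
            else Pa a * K a b * log 2 (Pa a * K a b / ((\<Sum>b'\<in>B. Pa a * K a b') * ?q)))
        = Pa a * K a b * (ln (K a b) - ln ?q) / ln 2"
    proof (cases "Pa a * K a b = 0")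
      case False
      then have "Pa a > 0" "K a b > 0" using Pa[OF a] K0[OF a] by (auto simp: less_le)
      moreover have "?q > 0"
        using \<open>Pa a > 0\<close> \<open>K a b > 0\<close> a A Pa K0
        by (intro sum_pos2[of _ a]) auto
      ultimately show ?thesis unfolding row by (simp add: log_def ln_div ln_mult)
    qed simp
  qed
  then show ?thesis by (simp add: sum_distrib_left)
qed

section \<open>Codes built from Shannon strategies\<close>

text \<open>Codeword k * M + m carries message m under key k; the input letter x(v_i, S_i) depends on
  the current state only.\<close>
definition shannon_code ::
  "nat \<Rightarrow> 'v list list \<Rightarrow> ('v \<Rightarrow> 's \<Rightarrow> 'x) \<Rightarrow> ('y list \<Rightarrow> nat \<Rightarrow> nat) \<Rightarrow> ('s, 'x, 'y) causal_code" where
  "shannon_code M cb xf decode = \<lparr>rand_size = 1, rand_pmf = (\<lambda>_. 1),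
      enc = (\<lambda>u i m k s. xf (cb ! (k * M + m) ! i) (last s)), dec = decode\<rparr>"

lemma shannon_code_simps [simp]:
  "rand_size (shannon_code M cb xf decode) = 1" "rand_pmf (shannon_code M cb xf decode) u = 1"
  "dec (shannon_code M cb xf decode) = decode"
  by (simp_all add: shannon_code_def)

lemma cinput_shannon_code:
  assumes "s \<in> seqs n" "i < n"
  shows "cinput (shannon_code M cb xf decode) n u m k s ! i = xf (cb ! (k * M + m) ! i) (s ! i)"
proof -
  have "last (take (Suc i) s) = s ! i"
    using assms by (simp add: seqs_def take_Suc_conv_app_nth)
  then show ?thesis using assms(2) by (simp add: cinput_def shannon_code_def)
qed

lemma sum_codeword_index:
  fixes f :: "nat \<Rightarrow> 'a::comm_monoid_add"
  shows "(\<Sum>m<M. \<Sum>k<K. f (k * M + m)) = (\<Sum>j<M * K. f j)"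
proof -
  have "(\<Sum>m<M. \<Sum>k<K. f (k * M + m)) = (\<Sum>(m, k)\<in>{..<M} \<times> {..<K}. f (k * M + m))"
    by (simp add: sum.cartesian_product)
  also have "\<dots> = (\<Sum>j<M * K. f j)"
  proof (rule sum.reindex_bij_witness[where i="\<lambda>j. (j mod M, j div M)" and j="\<lambda>(m, k). k * M + m"])
    fix a assume "a \<in> {..<M} \<times> {..<K}"
    then obtain m k where mk: "a = (m, k)" "m < M" "k < K" by auto
    have "k * M + m < Suc k * M" using mk by simp
    also have "\<dots> \<le> K * M" using mk by (intro mult_right_mono) auto
    finally show "(case a of (m, k) \<Rightarrow> k * M + m) \<in> {..<M * K}"
      using mk by (simp add: mult.commute)
    show "(\<lambda>j. (j mod M, j div M)) (case a of (m, k) \<Rightarrow> k * M + m) = a"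
      using mk by simp
  next
    fix j assume j: "j \<in> {..<M * K}"
    then have "M > 0" by (cases M) auto
    then show "(j mod M, j div M) \<in> {..<M} \<times> {..<K}"
      using j by (simp add: div_less_iff_less_mult mult.commute)
  qed auto
  finally show ?thesis .
qed

lemma tendsto_zero_if_nonneg_le:
  fixes f g :: "nat \<Rightarrow> real"
  assumes "\<And>n. 0 \<le> f n" and "\<And>n. f n \<le> g n" and "g \<longlonglongrightarrow> 0"
  shows "f \<longlonglongrightarrow> 0"
proof (rule tendsto_sandwich[of "\<lambda>_. 0" f sequentially g 0])
  show "eventually (\<lambda>n. 0 \<le> f n) sequentially" "eventually (\<lambda>n. f n \<le> g n) sequentially"
    using assms(1,2) by simp_all
qed (use assms(3) in simp_all)

lemma achievable_causal_if_excess_vanishes: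
  assumes ok: "\<And>n. code_ok (C n)" and excess: "e \<longlonglongrightarrow> 0"
    and err_nonneg: "\<And>n. err_prob PS W n R RK (C n) \<ge> 0"
    and div_nonneg: "\<And>n. rel_entropy (seqs n) (warden_dist PS W n R RK (C n)) (prodn n (Q0 PS W x0)) \<ge> 0"
    and le: "\<And>n. err_prob PS W n R RK (C n)
        + rel_entropy (seqs n) (warden_dist PS W n R RK (C n)) (prodn n (Q0 PS W x0))
        + max 0 (exp_cost PS b n R RK (C n) - B) \<le> e n"
  shows "achievable_causal PS W x0 b RK B R"
  unfolding achievable_causal_def
proof (intro exI[of _ C] conjI allI ok)
  show "(\<lambda>n. err_prob PS W n R RK (C n)) \<longlonglongrightarrow> 0"
    using le div_nonneg by (intro tendsto_zero_if_nonneg_le[OF err_nonneg _ excess]) (smt (verit))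
  show "(\<lambda>n. rel_entropy (seqs n) (warden_dist PS W n R RK (C n)) (prodn n (Q0 PS W x0))) \<longlonglongrightarrow> 0"
    using le err_nonneg by (intro tendsto_zero_if_nonneg_le[OF div_nonneg _ excess]) (smt (verit))
  have "limsup (\<lambda>n. ereal (exp_cost PS b n R RK (C n))) \<le> limsup (\<lambda>n. ereal (B + e n))"
    using le err_nonneg div_nonneg by (intro Limsup_mono always_eventually allI) (smt (verit) ereal_less_eq(3))
  also have "\<dots> = ereal B"
    using tendsto_add[OF tendsto_const excess, of B]
    by (intro lim_imp_Limsup) (simp_all add: tendsto_ereal)
  finally show "limsup (\<lambda>n. ereal (exp_cost PS b n R RK (C n))) \<le> ereal B" .
qed

section \<open>The channel induced by a Shannon strategy\<close>

locale covert_strategy =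
  fixes PS :: "'s::finite \<Rightarrow> real"
    and W :: "'s \<Rightarrow> 'x::finite \<Rightarrow> 'y::finite \<Rightarrow> 'z::finite \<Rightarrow> real"
    and x0 :: 'x and b :: "'x \<Rightarrow> real" and RK B :: real
    and V :: "nat set" and PV :: "nat \<Rightarrow> real" and xf :: "nat \<Rightarrow> 's \<Rightarrow> 'x"
  assumes PS: "is_pmf PS UNIV"
    and channel: "is_channel W"
    and Q0_pos: "\<forall>z. Q0 PS W x0 z > 0"
    and b_nonneg: "\<forall>x. b x \<ge> 0"
    and RK_nonneg: "RK \<ge> 0" and B_nonneg: "B \<ge> 0"
    and finite_V: "finite V"
    and PV: "is_pmf PV V"
    and output_Z: "\<forall>z. (\<Sum>v\<in>V. PVZ PS W PV xf v z) = Q0 PS W x0 z"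
    and mean_cost: "(\<Sum>v\<in>V. \<Sum>s\<in>UNIV. PV v * PS s * b (xf v s)) \<le> B"
begin

abbreviation "Q \<equiv> Q0 PS W x0"
abbreviation "IY \<equiv> mutual_info V UNIV (PVY PS W PV xf)"
abbreviation "IZ \<equiv> mutual_info V UNIV (PVZ PS W PV xf)"

definition "WVY v y = (\<Sum>s\<in>UNIV. PS s * WY W s (xf v s) y)"
definition "WVZ v z = (\<Sum>s\<in>UNIV. PS s * WZ W s (xf v s) z)"
definition "PY y = (\<Sum>v\<in>V. PV v * WVY v y)"
definition "cost_of v = (\<Sum>s\<in>UNIV. PS s * b (xf v s))"

definition "WVYn n v y = (\<Prod>i<n. WVY (v ! i) (y ! i))"
definition "WVZn n v z = (\<Prod>i<n. WVZ (v ! i) (z ! i))"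

lemma PS_nonneg: "PS s \<ge> 0" and sum_PS: "(\<Sum>s\<in>UNIV. PS s) = 1"
  using PS by (auto simp: is_pmf_def)

lemma PV_nonneg: "v \<in> V \<Longrightarrow> PV v \<ge> 0" and sum_PV: "sum PV V = 1"
  using PV by (auto simp: is_pmf_def)

lemma WY_nonneg: "WY W s x y \<ge> 0" and WZ_nonneg: "WZ W s x z \<ge> 0"
  using channel unfolding is_channel_def WY_def WZ_def by (auto intro: sum_nonneg)

lemma sum_WY: "(\<Sum>y\<in>UNIV. WY W s x y) = 1" and sum_WZ: "(\<Sum>z\<in>UNIV. WZ W s x z) = 1"
  using channel unfolding is_channel_def WY_def WZ_def by (auto simp: sum.swap[of _ "UNIV::'z set"])

lemma WVY_nonneg: "WVY v y \<ge> 0" and WVZ_nonneg: "WVZ v z \<ge> 0"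
  unfolding WVY_def WVZ_def by (auto intro!: sum_nonneg mult_nonneg_nonneg PS_nonneg WY_nonneg WZ_nonneg)

lemma sum_WVY: "(\<Sum>y\<in>UNIV. WVY v y) = 1" and sum_WVZ: "(\<Sum>z\<in>UNIV. WVZ v z) = 1"
  unfolding WVY_def WVZ_def
  by (simp_all add: sum.swap[of _ UNIV] sum_distrib_left[symmetric] sum_WY sum_WZ sum_PS)

lemma PVY_eq: "PVY PS W PV xf = (\<lambda>v y. PV v * WVY v y)"
  unfolding PVY_def WVY_def by (simp add: fun_eq_iff sum_distrib_left ac_simps)

lemma PVZ_eq: "PVZ PS W PV xf = (\<lambda>v z. PV v * WVZ v z)"
  unfolding PVZ_def WVZ_def by (simp add: fun_eq_iff sum_distrib_left ac_simps)

lemma Q_eq: "Q z = (\<Sum>v\<in>V. PV v * WVZ v z)"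
  using output_Z by (simp add: PVZ_eq)

lemma Q_pos: "Q z > 0"
  using Q0_pos by simp

lemma PY_pos: "v \<in> V \<Longrightarrow> PV v * WVY v y > 0 \<Longrightarrow> PY y > 0"
  unfolding PY_def using finite_V
  by (intro sum_pos2[of _ v]) (auto intro!: mult_nonneg_nonneg PV_nonneg WVY_nonneg)

lemma ln2_IY: "ln 2 * IY = (\<Sum>v\<in>V. \<Sum>y\<in>UNIV. PV v * WVY v y * (ln (WVY v y) - ln (PY y)))"
  unfolding PVY_eq PY_def
  by (rule ln2_mutual_info_eq) (auto simp: finite_V PV_nonneg WVY_nonneg sum_WVY)

lemma ln2_IZ: "ln 2 * IZ = (\<Sum>v\<in>V. \<Sum>z\<in>UNIV. PV v * WVZ v z * (ln (WVZ v z) - ln (Q z)))"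
  unfolding PVZ_eq Q_eq
  by (rule ln2_mutual_info_eq) (auto simp: finite_V PV_nonneg WVZ_nonneg sum_WVZ)

lemma WVYn_nonneg: "WVYn n v y \<ge> 0" and WVZn_nonneg: "WVZn n v z \<ge> 0"
  unfolding WVYn_def WVZn_def by (auto intro!: prod_nonneg WVY_nonneg WVZ_nonneg)

lemma sum_WVYn: "(\<Sum>y\<in>seqs n. WVYn n v y) = 1"
  using sum_prod_lists_of_length[of UNIV "\<lambda>i. WVY (v ! i)" n]
  unfolding WVYn_def seqs_eq_lists_of_length by (simp add: sum_WVY)

lemma sum_WVZn: "(\<Sum>z\<in>seqs n. WVZn n v z) = 1"
  using sum_prod_lists_of_length[of UNIV "\<lambda>i. WVZ (v ! i)" n]
  unfolding WVZn_def seqs_eq_lists_of_length by (simp add: sum_WVZ)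

lemma mean_WVYn: "iid_expectation V PV n (\<lambda>v. WVYn n v y) = prodn n PY y"
  unfolding WVYn_def prodn_def PY_def
  by (subst iid_expectation_coordinates[OF finite_V sum_PV]) auto

lemma mean_WVZn: "iid_expectation V PV n (\<lambda>v. WVZn n v z) = prodn n Q z"
  unfolding WVZn_def prodn_def Q_eq
  by (subst iid_expectation_coordinates[OF finite_V sum_PV]) auto

lemma prodn_Q_pos: "prodn n Q z > 0"
  unfolding prodn_def by (intro prod_pos) (simp add: Q_pos)

lemma sum_Q: "(\<Sum>z\<in>UNIV. Q z) = 1"
  unfolding Q_eq by (subst sum.swap) (simp add: sum_distrib_left[symmetric] sum_WVZ sum_PV)

lemma sum_prodn_Q: "(\<Sum>z\<in>seqs n. prodn n Q z) = 1"
  unfolding seqs_eq_lists_of_length prodn_def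
  using sum_prod_lists_of_length[of UNIV "\<lambda>_. Q" n] by (simp add: sum_Q)

lemma state_average_prod:
  "(\<Sum>s\<in>seqs n. prodn n PS s * (\<Prod>i<n. g i (s ! i))) = (\<Prod>i<n. \<Sum>s\<in>UNIV. PS s * g i s)"
  using iid_expectation_coordinates[of UNIV PS "{..<n}" n g] sum_PS
  by (simp add: iid_expectation_def prodn_def seqs_eq_lists_of_length)

lemma state_average_nth:
  "i < n \<Longrightarrow> (\<Sum>s\<in>seqs n. prodn n PS s * g (s ! i)) = (\<Sum>s\<in>UNIV. PS s * g s)"
  using iid_expectation_nth[of UNIV PS i n g] sum_PS
  by (simp add: iid_expectation_def prodn_def seqs_eq_lists_of_length)

definition "avg_cost n v = (\<Sum>i<n. cost_of (v ! i)) / real n"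

lemma err_prob_shannon_code:
  assumes M: "M = num_msgs n R" and K: "K = num_keys n RK"
  shows "err_prob PS W n R RK (shannon_code M cb xf d)
    = (\<Sum>m<M. \<Sum>k<K. \<Sum>y\<in>seqs n. WVYn n (cb ! (k * M + m)) y * (if d y k \<noteq> m then 1 else 0))
        / (real M * real K)"
proof -
  have "(\<Sum>s\<in>seqs n. cweight PS (shannon_code M cb xf d) n M K 0 m k s *
       (\<Sum>y\<in>seqs n. (\<Prod>i<n. WY W (s ! i) (cinput (shannon_code M cb xf d) n 0 m k s ! i) (y ! i)) *
           (if d y k \<noteq> m then 1 else 0)))
     = (\<Sum>y\<in>seqs n. WVYn n (cb ! (k * M + m)) y * (if d y k \<noteq> m then 1 else 0)) / (real M * real K)"
    for m k
  proof -
    let ?w = "cb ! (k * M + m)"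
    let ?I = "\<lambda>y. (if d y k \<noteq> m then 1 else 0 :: real)"
    have "(\<Sum>s\<in>seqs n. cweight PS (shannon_code M cb xf d) n M K 0 m k s *
       (\<Sum>y\<in>seqs n. (\<Prod>i<n. WY W (s ! i) (cinput (shannon_code M cb xf d) n 0 m k s ! i) (y ! i)) * ?I y))
       = (\<Sum>s\<in>seqs n. prodn n PS s / (real M * real K) *
       (\<Sum>y\<in>seqs n. (\<Prod>i<n. WY W (s ! i) (xf (?w ! i) (s ! i)) (y ! i)) * ?I y))"
      by (intro sum.cong refl arg_cong2[where f="(*)"] prod.cong)
         (auto simp: cweight_def cinput_shannon_code)
    also have "\<dots> = (\<Sum>y\<in>seqs n. \<Sum>s\<in>seqs n. prodn n PS s / (real M * real K) *
        ((\<Prod>i<n. WY W (s ! i) (xf (?w ! i) (s ! i)) (y ! i)) * ?I y))"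
      unfolding sum_distrib_left by (rule sum.swap)
    also have "\<dots> = (\<Sum>y\<in>seqs n. ?I y *
        (\<Sum>s\<in>seqs n. prodn n PS s * (\<Prod>i<n. WY W (s ! i) (xf (?w ! i) (s ! i)) (y ! i)))) / (real M * real K)"
      by (simp add: sum_distrib_left sum_divide_distrib ac_simps)
    also have "\<dots> = (\<Sum>y\<in>seqs n. ?I y * WVYn n ?w y) / (real M * real K)"
    proof -
      have "(\<Sum>s\<in>seqs n. prodn n PS s * (\<Prod>i<n. WY W (s ! i) (xf (?w ! i) (s ! i)) (y ! i)))
          = WVYn n ?w y" for y
        using state_average_prod[of n "\<lambda>i s. WY W s (xf (?w ! i) s) (y ! i)"]
        by (simp add: WVYn_def WVY_def)
      then show ?thesis by simp
    qed
    finally show ?thesis by (simp add: ac_simps)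
  qed
  then show ?thesis
    unfolding err_prob_def Let_def M[symmetric] K[symmetric]
    by (simp add: sum_divide_distrib)
qed

lemma warden_dist_shannon_code:
  assumes M: "M = num_msgs n R" and K: "K = num_keys n RK"
  shows "warden_dist PS W n R RK (shannon_code M cb xf d) z
    = (\<Sum>j<M * K. WVZn n (cb ! j) z) / (real M * real K)"
proof -
  have "(\<Sum>s\<in>seqs n. cweight PS (shannon_code M cb xf d) n M K 0 m k s *
       (\<Prod>i<n. WZ W (s ! i) (cinput (shannon_code M cb xf d) n 0 m k s ! i) (z ! i)))
     = WVZn n (cb ! (k * M + m)) z / (real M * real K)" for m k
  proof -
    let ?w = "cb ! (k * M + m)"
    have "(\<Sum>s\<in>seqs n. cweight PS (shannon_code M cb xf d) n M K 0 m k s *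
       (\<Prod>i<n. WZ W (s ! i) (cinput (shannon_code M cb xf d) n 0 m k s ! i) (z ! i)))
       = (\<Sum>s\<in>seqs n. prodn n PS s * (\<Prod>i<n. WZ W (s ! i) (xf (?w ! i) (s ! i)) (z ! i)))
           / (real M * real K)"
      unfolding sum_divide_distrib
      by (intro sum.cong refl)
         (auto simp: cweight_def cinput_shannon_code intro!: prod.cong)
    also have "\<dots> = WVZn n ?w z / (real M * real K)"
      using state_average_prod[of n "\<lambda>i s. WZ W s (xf (?w ! i) s) (z ! i)"]
      by (simp add: WVZn_def WVZ_def)
    finally show ?thesis .
  qed
  then show ?thesis
    unfolding warden_dist_def Let_def M[symmetric] K[symmetric]
    by (simp add: sum_divide_distrib sum_codeword_index[of "\<lambda>j. WVZn n (cb ! j) z", symmetric])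
qed

lemma exp_cost_shannon_code:
  assumes M: "M = num_msgs n R" and K: "K = num_keys n RK"
  shows "exp_cost PS b n R RK (shannon_code M cb xf d)
    = (\<Sum>j<M * K. avg_cost n (cb ! j)) / (real M * real K)"
proof -
  have "(\<Sum>s\<in>seqs n. cweight PS (shannon_code M cb xf d) n M K 0 m k s *
       ((\<Sum>i<n. b (cinput (shannon_code M cb xf d) n 0 m k s ! i)) / real n))
     = avg_cost n (cb ! (k * M + m)) / (real M * real K)" for m k
  proof -
    let ?w = "cb ! (k * M + m)"
    have "(\<Sum>s\<in>seqs n. cweight PS (shannon_code M cb xf d) n M K 0 m k s *
       ((\<Sum>i<n. b (cinput (shannon_code M cb xf d) n 0 m k s ! i)) / real n))
       = (\<Sum>s\<in>seqs n. \<Sum>i<n. prodn n PS s * b (xf (?w ! i) (s ! i)) / (real M * real K * real n))"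
    proof (intro sum.cong refl)
      fix s :: "'s list" assume s: "s \<in> seqs n"
      have "(\<Sum>i<n. b (cinput (shannon_code M cb xf d) n 0 m k s ! i)) = (\<Sum>i<n. b (xf (?w ! i) (s ! i)))"
        using s by (intro sum.cong refl) (simp add: cinput_shannon_code)
      then show "cweight PS (shannon_code M cb xf d) n M K 0 m k s *
          ((\<Sum>i<n. b (cinput (shannon_code M cb xf d) n 0 m k s ! i)) / real n)
        = (\<Sum>i<n. prodn n PS s * b (xf (?w ! i) (s ! i)) / (real M * real K * real n))"
        by (simp add: cweight_def sum_distrib_left sum_divide_distrib)
    qed
    also have "\<dots> = (\<Sum>i<n. \<Sum>s\<in>seqs n. prodn n PS s * b (xf (?w ! i) (s ! i))) / (real M * real K * real n)"
      by (subst sum.swap) (simp add: sum_divide_distrib)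
    also have "\<dots> = avg_cost n ?w / (real M * real K)"
    proof -
      have "(\<Sum>s\<in>seqs n. prodn n PS s * b (xf (?w ! i) (s ! i))) = cost_of (?w ! i)" if "i < n" for i
        using state_average_nth[OF that, of "\<lambda>s. b (xf (?w ! i) s)"] by (simp add: cost_of_def)
      then show ?thesis by (simp add: avg_cost_def)
    qed
    finally show ?thesis .
  qed
  then show ?thesis
    unfolding exp_cost_def Let_def M[symmetric] K[symmetric]
    by (simp add: sum_divide_distrib sum_codeword_index[of "\<lambda>j. avg_cost n (cb ! j)", symmetric])
qed

end

section \<open>Random coding\<close>

locale covert_rates = covert_strategy +
  fixes R \<gamma> :: real
  assumes R_nonneg: "0 \<le> R" and key_rate: "IZ < R + RK"
    and threshold: "R = 0 \<or> (R < \<gamma> \<and> \<gamma> < IY)"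
begin

definition "Mn n = num_msgs n R"
definition "Kn n = num_keys n RK"
definition "Nn n = Mn n * Kn n"

definition "typical n v y \<longleftrightarrow> WVYn n v y > 2 powr (real n * \<gamma>) * prodn n PY y"

text \<open>A single message is decoded without consulting the channel output, since
  LEAST over an empty set is an unspecified number.\<close>
definition "threshold_decoder n cb y k =
  (if Mn n = 1 then 0 else LEAST m. m < Mn n \<and> typical n (cb ! (k * Mn n + m)) y)"

definition "code n cb = shannon_code (Mn n) cb xf (threshold_decoder n cb)"

abbreviation "codebook_mean n \<equiv> iid_expectation (lists_of_length V n) (prodn n PV) (Nn n)"

lemma Mn_pos: "Mn n \<ge> 1"
proof -
  have "\<lceil>2 powr (real n * R)\<rceil> \<ge> 1" by (simp add: ceiling_le_iff)
  then show ?thesis unfolding Mn_def num_msgs_def by linarith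
qed

lemma Kn_pos: "Kn n \<ge> 1"
proof -
  have "2 powr (real n * RK) \<ge> 1" using RK_nonneg by (simp add: ge_one_powr_ge_zero)
  then show ?thesis unfolding Kn_def num_keys_def by linarith
qed

lemma Nn_pos: "Nn n \<ge> 1"
  using Mn_pos Kn_pos by (simp add: Nn_def)

lemma Mn_le: "real (Mn n) - 1 \<le> 2 powr (real n * R)"
proof -
  have "real_of_int \<lceil>2 powr (real n * R)\<rceil> < 2 powr (real n * R) + 1"
    using ceiling_correct[of "2 powr (real n * R)"] by linarith
  moreover have "\<lceil>2 powr (real n * R)\<rceil> \<ge> 0"
    using ceiling_mono[of 0 "2 powr (real n * R)"] by simp
  ultimately show ?thesis unfolding Mn_def num_msgs_def by simp
qed

lemma Mn_ge: "real (Mn n) \<ge> 2 powr (real n * R)"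
  unfolding Mn_def num_msgs_def by (simp add: real_nat_ceiling_ge)

lemma Kn_ge: "real (Kn n) \<ge> 2 powr (real n * RK) / 2"
proof -
  let ?y = "2 powr (real n * RK)"
  have "?y \<ge> 1" using RK_nonneg by (simp add: ge_one_powr_ge_zero)
  moreover have "real_of_int \<lfloor>?y\<rfloor> > ?y - 1" using floor_correct[of ?y] by linarith
  moreover have "real_of_int \<lfloor>?y\<rfloor> \<ge> 1" using \<open>?y \<ge> 1\<close> by simp
  ultimately have "real_of_int \<lfloor>?y\<rfloor> \<ge> ?y / 2" "\<lfloor>?y\<rfloor> \<ge> 0" by linarith+
  then show ?thesis unfolding Kn_def num_keys_def by simp
qed

lemma ln_Nn_ge: "ln (real (Nn n)) \<ge> real n * (R + RK) * ln 2 - ln 2"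
proof -
  have pos: "0 < 2 powr (real n * R) * (2 powr (real n * RK) / 2)" by simp
  have "real (Nn n) \<ge> 2 powr (real n * R) * (2 powr (real n * RK) / 2)"
    unfolding Nn_def of_nat_mult by (intro mult_mono Mn_ge Kn_ge) auto
  then have "ln (2 powr (real n * R) * (2 powr (real n * RK) / 2)) \<le> ln (real (Nn n))"
    using pos Nn_pos[of n] by (subst ln_le_cancel_iff) auto
  then show ?thesis by (simp add: ln_mult ln_div ln_powr algebra_simps)
qed

lemma codeword_index_less: "m < Mn n \<Longrightarrow> k < Kn n \<Longrightarrow> k * Mn n + m < Nn n"
proof -
  assume m: "m < Mn n" and k: "k < Kn n"
  have "k * Mn n + m < Suc k * Mn n" using m by simp
  also have "\<dots> \<le> Kn n * Mn n" using k by (intro mult_right_mono) auto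
  finally show ?thesis by (simp add: Nn_def mult.commute)
qed

lemma prodn_PV_nonneg: "v \<in> lists_of_length V n \<Longrightarrow> prodn n PV v \<ge> 0"
  unfolding prodn_def by (auto intro!: prod_nonneg PV_nonneg nth_in_lists_of_length)

lemma sum_prodn_PV: "sum (prodn n PV) (lists_of_length V n) = 1"
  using iid_expectation_const[OF finite_V sum_PV, of n 1] by (simp add: iid_expectation_eq_prodn)

lemma codebook_mean_const: "codebook_mean n (\<lambda>cb. c) = c"
  by (rule iid_expectation_const[OF finite_lists_of_length[OF finite_V] sum_prodn_PV])

lemma codebook_mean_mono:
  "(\<And>cb. cb \<in> lists_of_length (lists_of_length V n) (Nn n) \<Longrightarrow> f cb \<le> g cb)
    \<Longrightarrow> codebook_mean n f \<le> codebook_mean n g"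
  by (rule iid_expectation_mono) (auto intro: prodn_PV_nonneg)

lemma codebook_mean_codeword:
  "j < Nn n \<Longrightarrow> codebook_mean n (\<lambda>cb. \<phi> (cb ! j)) = iid_expectation V PV n \<phi>"
  unfolding iid_expectation_eq_prodn[of V PV n]
  by (rule iid_expectation_nth[OF finite_lists_of_length[OF finite_V] sum_prodn_PV])

lemma codebook_mean_two_codewords:
  "j < Nn n \<Longrightarrow> j' < Nn n \<Longrightarrow> j \<noteq> j' \<Longrightarrow>
    codebook_mean n (\<lambda>cb. \<phi> (cb ! j) * \<psi> (cb ! j')) = iid_expectation V PV n \<phi> * iid_expectation V PV n \<psi>"
  unfolding iid_expectation_eq_prodn[of V PV n]
  by (rule iid_expectation_nth_nth[OF finite_lists_of_length[OF finite_V] sum_prodn_PV])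

lemma exists_good_codebook:
  "\<exists>cb\<in>lists_of_length (lists_of_length V n) (Nn n). f cb \<le> codebook_mean n f"
  by (rule exists_le_iid_expectation[OF finite_lists_of_length[OF finite_V] prodn_PV_nonneg sum_prodn_PV])

subsection \<open>Decoding error\<close>

lemma err_prob_code:
  "err_prob PS W n R RK (code n cb) =
    (\<Sum>m<Mn n. \<Sum>k<Kn n. \<Sum>y\<in>seqs n. WVYn n (cb ! (k * Mn n + m)) y *
       (if threshold_decoder n cb y k \<noteq> m then 1 else 0)) / real (Nn n)"
  unfolding code_def Nn_def using err_prob_shannon_code[OF Mn_def Kn_def] by simp

lemma err_prob_nonneg: "err_prob PS W n R RK (code n cb) \<ge> 0"
  unfolding err_prob_code by (intro divide_nonneg_nonneg sum_nonneg mult_nonneg_nonneg WVYn_nonneg) auto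

lemma threshold_decoder_error_le:
  assumes m: "m < Mn n" and M: "Mn n \<noteq> 1"
  shows "(if threshold_decoder n cb y k \<noteq> m then 1 else 0 :: real)
    \<le> (if typical n (cb ! (k * Mn n + m)) y then 0 else 1) +
       (\<Sum>m'\<in>{..<Mn n} - {m}. if typical n (cb ! (k * Mn n + m')) y then 1 else 0)"
proof -
  let ?P = "\<lambda>m'. m' < Mn n \<and> typical n (cb ! (k * Mn n + m')) y"
  let ?others = "\<Sum>m'\<in>{..<Mn n} - {m}. if typical n (cb ! (k * Mn n + m')) y then 1 else 0 :: real"
  have others_nonneg: "0 \<le> ?others" by (intro sum_nonneg) auto
  show ?thesis
  proof (cases "?P m \<and> (LEAST m'. ?P m') = m")
    case True
    then show ?thesis using M others_nonneg by (simp add: threshold_decoder_def)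
  next
    case False
    show ?thesis
    proof (cases "?P m")
      case True
      then have "?P (LEAST m'. ?P m')" by (rule LeastI)
      moreover have "(LEAST m'. ?P m') \<noteq> m" using True False by simp
      ultimately have "(1::real) \<le> ?others"
        by (intro member_le_sum[where i = "LEAST m'. ?P m'", THEN order_trans[rotated]]) auto
      then show ?thesis by simp
    qed (use m others_nonneg in auto)
  qed
qed

definition "atypicality n =
  iid_expectation V PV n (\<lambda>v. \<Sum>y\<in>seqs n. WVYn n v y * (if typical n v y then 0 else 1))"

lemma atypicality_nonneg: "atypicality n \<ge> 0"
  unfolding atypicality_def iid_expectation_eq_prodn
  by (intro sum_nonneg mult_nonneg_nonneg prodn_PV_nonneg WVYn_nonneg) auto

lemma false_typicality_le:
  "(\<Sum>y\<in>seqs n. prodn n PY y * iid_expectation V PV n (\<lambda>v. if typical n v y then 1 else 0))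
     \<le> 2 powr (-(real n * \<gamma>))"
proof -
  have pointwise: "prodn n PY y * (if typical n v y then 1 else 0) \<le> 2 powr (-(real n * \<gamma>)) * WVYn n v y"
    for v y
  proof (cases "typical n v y")
    case True
    then have "2 powr (-(real n * \<gamma>)) * (2 powr (real n * \<gamma>) * prodn n PY y)
        \<le> 2 powr (-(real n * \<gamma>)) * WVYn n v y"
      by (intro mult_left_mono) (auto simp: typical_def)
    then show ?thesis using True by (simp add: powr_minus field_simps)
  qed (simp add: WVYn_nonneg)
  have "(\<Sum>y\<in>seqs n. prodn n PY y * iid_expectation V PV n (\<lambda>v. if typical n v y then 1 else 0))
      = iid_expectation V PV n (\<lambda>v. \<Sum>y\<in>seqs n. prodn n PY y * (if typical n v y then 1 else 0))"
    by (simp add: iid_expectation_sum finite_seqs iid_expectation_cmult)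
  also have "\<dots> \<le> iid_expectation V PV n (\<lambda>v. 2 powr (-(real n * \<gamma>)) * (\<Sum>y\<in>seqs n. WVYn n v y))"
    unfolding sum_distrib_left
    by (intro iid_expectation_mono sum_mono pointwise) (auto simp: PV_nonneg)
  also have "\<dots> = 2 powr (-(real n * \<gamma>))"
    by (simp add: sum_WVYn iid_expectation_const[OF finite_V sum_PV])
  finally show ?thesis .
qed

lemma mean_decoding_error_term:
  assumes m: "m < Mn n" and k: "k < Kn n"
  shows "codebook_mean n (\<lambda>cb. WVYn n (cb ! (k * Mn n + m)) y *
           ((if typical n (cb ! (k * Mn n + m)) y then 0 else 1) +
            (\<Sum>m'\<in>{..<Mn n} - {m}. if typical n (cb ! (k * Mn n + m')) y then 1 else 0)))
    = iid_expectation V PV n (\<lambda>v. WVYn n v y * (if typical n v y then 0 else 1))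
      + real (Mn n - 1) * (prodn n PY y * iid_expectation V PV n (\<lambda>v. if typical n v y then 1 else 0))"
proof -
  let ?j = "\<lambda>m. k * Mn n + m"
  have other: "codebook_mean n (\<lambda>cb. WVYn n (cb ! ?j m) y * (if typical n (cb ! ?j m') y then 1 else 0))
      = prodn n PY y * iid_expectation V PV n (\<lambda>v. if typical n v y then 1 else 0)"
    if "m' \<in> {..<Mn n} - {m}" for m'
    using that m k codebook_mean_two_codewords[of "?j m" n "?j m'" "\<lambda>v. WVYn n v y"]
    by (simp add: codeword_index_less mean_WVYn)
  have "codebook_mean n (\<lambda>cb. WVYn n (cb ! ?j m) y *
           ((if typical n (cb ! ?j m) y then 0 else 1) +
            (\<Sum>m'\<in>{..<Mn n} - {m}. if typical n (cb ! ?j m') y then 1 else 0)))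
    = codebook_mean n (\<lambda>cb. WVYn n (cb ! ?j m) y * (if typical n (cb ! ?j m) y then 0 else 1))
      + (\<Sum>m'\<in>{..<Mn n} - {m}.
           codebook_mean n (\<lambda>cb. WVYn n (cb ! ?j m) y * (if typical n (cb ! ?j m') y then 1 else 0)))"
    by (simp add: distrib_left sum_distrib_left iid_expectation_add iid_expectation_sum)
  also have "\<dots> = iid_expectation V PV n (\<lambda>v. WVYn n v y * (if typical n v y then 0 else 1))
      + real (Mn n - 1) * (prodn n PY y * iid_expectation V PV n (\<lambda>v. if typical n v y then 1 else 0))"
    using codebook_mean_codeword[OF codeword_index_less[OF m k],
        of "\<lambda>v. WVYn n v y * (if typical n v y then 0 else 1)"] m
    by (simp add: other)
  finally show ?thesis .
qed

lemma mean_err_prob_le: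
  "codebook_mean n (\<lambda>cb. err_prob PS W n R RK (code n cb))
     \<le> atypicality n + real (Mn n - 1) * 2 powr (-(real n * \<gamma>))"
proof (cases "Mn n = 1")
  case True
  then have "err_prob PS W n R RK (code n cb) = 0" for cb
    by (simp add: err_prob_code threshold_decoder_def)
  then show ?thesis using True atypicality_nonneg by (simp add: codebook_mean_const)
next
  case M: False
  let ?C = "atypicality n + real (Mn n - 1) * 2 powr (-(real n * \<gamma>))"
  define H where "H m k y cb = WVYn n (cb ! (k * Mn n + m)) y *
           ((if typical n (cb ! (k * Mn n + m)) y then 0 else 1) +
            (\<Sum>m'\<in>{..<Mn n} - {m}. if typical n (cb ! (k * Mn n + m')) y then 1 else 0))" for m k y cb
  have "err_prob PS W n R RK (code n cb) \<le> (\<Sum>m<Mn n. \<Sum>k<Kn n. \<Sum>y\<in>seqs n. H m k y cb) / real (Nn n)" for cb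
    unfolding err_prob_code H_def
    by (intro divide_right_mono sum_mono mult_left_mono threshold_decoder_error_le M WVYn_nonneg) auto
  then have "codebook_mean n (\<lambda>cb. err_prob PS W n R RK (code n cb))
      \<le> codebook_mean n (\<lambda>cb. (\<Sum>m<Mn n. \<Sum>k<Kn n. \<Sum>y\<in>seqs n. H m k y cb) / real (Nn n))"
    by (intro codebook_mean_mono)
  also have "\<dots> = (\<Sum>m<Mn n. \<Sum>k<Kn n. \<Sum>y\<in>seqs n. codebook_mean n (H m k y)) / real (Nn n)"
    by (simp add: iid_expectation_divide iid_expectation_sum finite_seqs)
  also have "\<dots> \<le> (\<Sum>m<Mn n. \<Sum>k<Kn n. ?C) / real (Nn n)"
  proof (intro divide_right_mono sum_mono)
    fix m k assume "m \<in> {..<Mn n}" "k \<in> {..<Kn n}"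
    then have "(\<Sum>y\<in>seqs n. codebook_mean n (H m k y)) = atypicality n
        + real (Mn n - 1) * (\<Sum>y\<in>seqs n. prodn n PY y * iid_expectation V PV n (\<lambda>v. if typical n v y then 1 else 0))"
      unfolding H_def atypicality_def
      by (simp add: mean_decoding_error_term sum.distrib sum_distrib_left iid_expectation_sum finite_seqs)
    also have "\<dots> \<le> ?C"
      using false_typicality_le by (intro add_left_mono mult_left_mono) auto
    finally show "(\<Sum>y\<in>seqs n. codebook_mean n (H m k y)) \<le> ?C" .
  qed auto
  also have "\<dots> = ?C"
    using Nn_pos[of n] by (simp add: Nn_def)
  finally show ?thesis .
qed

lemma info_density_le_if_not_typical:
  assumes not_typical: "\<not> typical n v y"
    and W_pos: "\<And>i. i < n \<Longrightarrow> WVY (v ! i) (y ! i) > 0" and PY_pos: "\<And>i. i < n \<Longrightarrow> PY (y ! i) > 0"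
  shows "(\<Sum>i<n. ln (WVY (v ! i) (y ! i)) - ln (PY (y ! i))) \<le> real n * \<gamma> * ln 2"
proof -
  have PYn_pos: "prodn n PY y > 0" unfolding prodn_def using PY_pos by (intro prod_pos) auto
  have "ln (WVYn n v y) \<le> ln (2 powr (real n * \<gamma>) * prodn n PY y)"
    using not_typical W_pos PYn_pos
    by (subst ln_le_cancel_iff) (auto simp: typical_def WVYn_def intro!: prod_pos)
  also have "\<dots> = real n * \<gamma> * ln 2 + ln (prodn n PY y)"
    using PYn_pos by (simp add: ln_mult_pos ln_powr)
  moreover have "ln (WVYn n v y) = (\<Sum>i<n. ln (WVY (v ! i) (y ! i)))"
    unfolding WVYn_def using W_pos by (intro ln_prod) (auto simp: less_imp_neq[symmetric])
  moreover have "ln (prodn n PY y) = (\<Sum>i<n. ln (PY (y ! i)))"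
    unfolding prodn_def using PY_pos by (intro ln_prod) (auto simp: less_imp_neq[symmetric])
  ultimately show ?thesis by (simp add: sum_subtractf)
qed

lemma atypicality_le_geometric:
  assumes "\<gamma> < IY"
  shows "\<exists>\<rho>. 0 \<le> \<rho> \<and> \<rho> < 1 \<and> (\<forall>n. atypicality n \<le> \<rho> ^ n)"
proof -
  define p where "p = (\<lambda>(v, y). PV v * WVY v y)"
  define c where "c = (\<lambda>(v, y). \<gamma> * ln 2 - (ln (WVY v y) - ln (PY y)))"
  have p_nonneg: "p w \<ge> 0" if "w \<in> V \<times> UNIV" for w
    using that by (auto simp: p_def intro!: mult_nonneg_nonneg PV_nonneg WVY_nonneg)
  have sum_p: "sum p (V \<times> UNIV) = 1"
    by (simp add: p_def sum.cartesian_product' sum_distrib_left[symmetric] sum_WVY sum_PV)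
  have "(\<Sum>w\<in>V \<times> UNIV. p w * c w) = (\<Sum>v\<in>V. \<Sum>y\<in>UNIV.
      \<gamma> * ln 2 * p (v, y) - PV v * WVY v y * (ln (WVY v y) - ln (PY y)))"
    unfolding sum.cartesian_product' by (intro sum.cong refl) (simp add: p_def c_def algebra_simps)
  also have "\<dots> = \<gamma> * ln 2 * sum p (V \<times> UNIV) - ln 2 * IY"
    unfolding ln2_IY sum.cartesian_product' by (simp add: sum_subtractf sum_distrib_left)
  also have "\<dots> < 0" using assms sum_p by simp
  finally have neg: "(\<Sum>w\<in>V \<times> UNIV. p w * c w) < 0" .
  have pointwise: "(if typical n (map fst w) (map snd w) then 0 else 1) \<le> 1 * exp (t * (\<Sum>i<n. c (w ! i)))"
    if t: "0 < t" and w: "w \<in> lists_of_length (V \<times> UNIV) n" and pos: "\<forall>i<n. p (w ! i) > 0" for t n w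
  proof (cases "typical n (map fst w) (map snd w)")
    case False
    have len: "length w = n" using w by (simp add: lists_of_length_def)
    have v: "fst (w ! i) \<in> V" if "i < n" for i
      using nth_in_lists_of_length[OF w that] by auto
    have "WVY (fst (w ! i)) (snd (w ! i)) > 0" and "PY (snd (w ! i)) > 0" if "i < n" for i
      using pos that PV_nonneg[OF v[OF that]] WVY_nonneg PY_pos[OF v[OF that]]
      by (auto simp: p_def case_prod_beta zero_less_mult_iff)
    then have "(\<Sum>i<n. ln (WVY (fst (w ! i)) (snd (w ! i))) - ln (PY (snd (w ! i)))) \<le> real n * \<gamma> * ln 2"
      using info_density_le_if_not_typical[of n "map fst w" "map snd w"] False len by simp
    then have "0 \<le> (\<Sum>i<n. c (w ! i))"
      by (simp add: c_def case_prod_beta sum_subtractf)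
    then show ?thesis using t by simp
  qed simp
  obtain t \<rho> where "0 \<le> \<rho>" "\<rho> < 1" "\<And>n. iid_expectation (V \<times> UNIV) p n
      (\<lambda>w. if typical n (map fst w) (map snd w) then 0 else 1) \<le> 1 * \<rho> ^ n"
    using iid_expectation_exponential_decay[OF _ p_nonneg sum_p neg, of "\<lambda>_. 1"
        "\<lambda>n w. if typical n (map fst w) (map snd w) then 0 else 1"] pointwise finite_V
    by auto
  moreover have "atypicality n = iid_expectation (V \<times> UNIV) p n
      (\<lambda>w. if typical n (map fst w) (map snd w) then 0 else 1)" for n
    using iid_expectation_pairs[where A = V and p = PV and B = UNIV and q = WVY and n = n
        and g = "\<lambda>v y. if typical n v y then 0 else 1"]
    by (simp add: atypicality_def seqs_eq_lists_of_length WVYn_def p_def)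
  ultimately show ?thesis by auto
qed

subsection \<open>Soft covering\<close>

definition "output_mixture n cb z = (\<Sum>j<Nn n. WVZn n (cb ! j) z) / real (Nn n)"

lemma output_mixture_nonneg: "output_mixture n cb z \<ge> 0"
  unfolding output_mixture_def by (intro divide_nonneg_nonneg sum_nonneg WVZn_nonneg) auto

lemma sum_output_mixture: "(\<Sum>z\<in>seqs n. output_mixture n cb z) = 1"
proof -
  have "(\<Sum>z\<in>seqs n. \<Sum>j<Nn n. WVZn n (cb ! j) z) = (\<Sum>j<Nn n. \<Sum>z\<in>seqs n. WVZn n (cb ! j) z)"
    by (rule sum.swap)
  then show ?thesis
    unfolding output_mixture_def using Nn_pos[of n] by (simp add: sum_divide_distrib[symmetric] sum_WVZn)
qed

lemma warden_dist_code: "warden_dist PS W n R RK (code n cb) = output_mixture n cb"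
  unfolding code_def output_mixture_def Nn_def
  using warden_dist_shannon_code[OF Mn_def Kn_def] by (simp add: fun_eq_iff)

lemma divergence_code:
  "rel_entropy (seqs n) (warden_dist PS W n R RK (code n cb)) (prodn n Q)
   = (\<Sum>z\<in>seqs n. \<Sum>j<Nn n. WVZn n (cb ! j) z * ln (output_mixture n cb z / prodn n Q z))
       / (real (Nn n) * ln 2)"
proof -
  have "rel_entropy (seqs n) (warden_dist PS W n R RK (code n cb)) (prodn n Q)
    = (\<Sum>z\<in>seqs n. (\<Sum>j<Nn n. WVZn n (cb ! j) z * ln (output_mixture n cb z / prodn n Q z))
       / (real (Nn n) * ln 2))"
    unfolding rel_entropy_def warden_dist_code
  proof (intro sum.cong refl)
  fix z
  show "(if output_mixture n cb z = 0 then 0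
         else output_mixture n cb z * log 2 (output_mixture n cb z / prodn n Q z))
      = (\<Sum>j<Nn n. WVZn n (cb ! j) z * ln (output_mixture n cb z / prodn n Q z)) / (real (Nn n) * ln 2)"
  proof (cases "output_mixture n cb z = 0")
    case True
    then have "(\<Sum>j<Nn n. WVZn n (cb ! j) z) = 0"
      using Nn_pos[of n] by (simp add: output_mixture_def)
    then have "\<forall>j\<in>{..<Nn n}. WVZn n (cb ! j) z = 0"
      by (subst sum_nonneg_eq_0_iff[symmetric]) (auto simp: WVZn_nonneg)
    then show ?thesis using True by simp
  next
    case False
    then show ?thesis
      by (simp add: output_mixture_def log_def sum_distrib_right sum_divide_distrib)
  qed
  qed
  then show ?thesis by (simp add: sum_divide_distrib)
qed

lemma divergence_nonneg: "rel_entropy (seqs n) (warden_dist PS W n R RK (code n cb)) (prodn n Q) \<ge> 0"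
  unfolding warden_dist_code
  by (rule rel_entropy_nonneg) (auto simp: finite_seqs output_mixture_nonneg prodn_Q_pos sum_output_mixture sum_prodn_Q)

definition "likelihood_ratio n v z = WVZn n v z / prodn n Q z"

lemma likelihood_ratio_nonneg: "likelihood_ratio n v z \<ge> 0"
  unfolding likelihood_ratio_def using prodn_Q_pos by (intro divide_nonneg_pos WVZn_nonneg)

lemma likelihood_ratio_pos: "WVZn n v z \<noteq> 0 \<Longrightarrow> likelihood_ratio n v z > 0"
  unfolding likelihood_ratio_def using WVZn_nonneg[of n v z] prodn_Q_pos[of n z] by simp

lemma mean_covering_weight:
  assumes j: "j < Nn n"
  shows "codebook_mean n (\<lambda>cb. WVZn n (cb ! j) z / (likelihood_ratio n (cb ! j) z + real (Nn n) - 1)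
      * (\<Sum>j'<Nn n. likelihood_ratio n (cb ! j') z))
    = prodn n Q z"
proof -
  define a where "a v = likelihood_ratio n v z" for v
  define w where "w v = WVZn n v z / (a v + real (Nn n) - 1)" for v
  have "a = (\<lambda>v. WVZn n v z / prodn n Q z)"
    by (simp add: fun_eq_iff a_def likelihood_ratio_def)
  then have mean_a: "iid_expectation V PV n a = 1"
    using prodn_Q_pos[of n z] by (simp add: iid_expectation_divide mean_WVZn)
  have "codebook_mean n (\<lambda>cb. w (cb ! j) * (\<Sum>j'<Nn n. a (cb ! j')))
    = codebook_mean n (\<lambda>cb. w (cb ! j) * a (cb ! j))
      + (\<Sum>j'\<in>{..<Nn n} - {j}. codebook_mean n (\<lambda>cb. w (cb ! j) * a (cb ! j')))"
    unfolding sum_distrib_left iid_expectation_sum[OF finite_lessThan]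
    using j by (simp add: sum.remove[of _ j])
  also have "\<dots> = iid_expectation V PV n (\<lambda>v. w v * a v) + (real (Nn n) - 1) * iid_expectation V PV n w"
    using j Nn_pos[of n]
    by (simp add: codebook_mean_codeword[OF j, of "\<lambda>v. w v * a v"] codebook_mean_two_codewords
        mean_a of_nat_diff)
  also have "\<dots> = iid_expectation V PV n (\<lambda>v. w v * a v + (real (Nn n) - 1) * w v)"
    by (simp add: iid_expectation_add iid_expectation_cmult)
  also have "\<dots> = iid_expectation V PV n (\<lambda>v. w v * (a v + real (Nn n) - 1))"
    by (simp add: algebra_simps)
  also have "\<dots> = iid_expectation V PV n (\<lambda>v. WVZn n v z)"
  proof -
    have "w v * (a v + real (Nn n) - 1) = WVZn n v z" for v
    proof (cases "WVZn n v z = 0")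
      case False
      then show ?thesis using likelihood_ratio_pos[OF False] Nn_pos[of n] by (simp add: w_def a_def)
    qed (simp add: w_def)
    then show ?thesis by simp
  qed
  finally show ?thesis by (simp add: mean_WVZn w_def a_def)
qed

text \<open>The mixture is compared, via ln x \<le> ln y + x / y - 1, with its conditional mean given
  codeword j, which is (a_j + N - 1) / N times Q^n.\<close>
lemma soft_covering_term_le:
  assumes j: "j < Nn n"
  shows "codebook_mean n (\<lambda>cb. WVZn n (cb ! j) z * ln (output_mixture n cb z / prodn n Q z))
     \<le> iid_expectation V PV n (\<lambda>v. WVZn n v z * ln (1 + WVZn n v z / (real (Nn n) * prodn n Q z)))"
proof -
  let ?N = "real (Nn n)"
  define a where "a v = likelihood_ratio n v z" for v
  define w where "w v = WVZn n v z / (a v + ?N - 1)" for v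
  define S where "S cb = (\<Sum>j'<Nn n. a (cb ! j'))" for cb
  have N: "?N \<ge> 1" using Nn_pos[of n] by simp
  have pointwise: "WVZn n (cb ! j) z * ln (output_mixture n cb z / prodn n Q z)
    \<le> WVZn n (cb ! j) z * ln (1 + a (cb ! j) / ?N) + w (cb ! j) * S cb - WVZn n (cb ! j) z"
    for cb
  proof (cases "WVZn n (cb ! j) z = 0")
    case False
    have a_pos: "a (cb ! j) > 0" unfolding a_def by (rule likelihood_ratio_pos[OF False])
    have "a (cb ! j) \<le> S cb"
      unfolding S_def a_def using j by (intro member_le_sum likelihood_ratio_nonneg) auto
    then have "ln (S cb / ?N) \<le> ln (1 + a (cb ! j) / ?N) + S cb / (a (cb ! j) + ?N - 1) - 1"
      using a_pos N by (intro ln_average_le) auto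
    then have "WVZn n (cb ! j) z * ln (S cb / ?N)
        \<le> WVZn n (cb ! j) z * (ln (1 + a (cb ! j) / ?N) + S cb / (a (cb ! j) + ?N - 1) - 1)"
      using WVZn_nonneg by (rule mult_left_mono)
    moreover have "output_mixture n cb z / prodn n Q z = S cb / ?N"
      unfolding output_mixture_def S_def a_def likelihood_ratio_def
      by (simp add: sum_divide_distrib divide_divide_eq_left mult.commute)
    ultimately show ?thesis
      by (simp add: w_def algebra_simps)
  qed (simp add: w_def)
  have "codebook_mean n (\<lambda>cb. WVZn n (cb ! j) z * ln (output_mixture n cb z / prodn n Q z))
    \<le> codebook_mean n (\<lambda>cb. WVZn n (cb ! j) z * ln (1 + a (cb ! j) / ?N)
      + w (cb ! j) * S cb - WVZn n (cb ! j) z)"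
    by (intro codebook_mean_mono pointwise)
  also have "\<dots> = iid_expectation V PV n (\<lambda>v. WVZn n v z * ln (1 + a v / ?N))"
  proof -
    have "codebook_mean n (\<lambda>cb. w (cb ! j) * S cb) = prodn n Q z"
      using mean_covering_weight[OF j, of z] by (simp add: w_def a_def S_def)
    then show ?thesis
      using codebook_mean_codeword[OF j, of "\<lambda>v. WVZn n v z * ln (1 + a v / ?N)"]
        codebook_mean_codeword[OF j, of "\<lambda>v. WVZn n v z"]
      by (simp add: iid_expectation_add iid_expectation_diff mean_WVZn)
  qed
  finally show ?thesis by (simp add: a_def likelihood_ratio_def mult.commute)
qed

lemma mean_divergence_le:
  "codebook_mean n (\<lambda>cb. rel_entropy (seqs n) (warden_dist PS W n R RK (code n cb)) (prodn n Q))
   \<le> iid_expectation V PV n (\<lambda>v. \<Sum>z\<in>seqs n.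
        WVZn n v z * ln (1 + WVZn n v z / (real (Nn n) * prodn n Q z))) / ln 2"
proof -
  let ?F = "\<lambda>z. iid_expectation V PV n (\<lambda>v. WVZn n v z * ln (1 + WVZn n v z / (real (Nn n) * prodn n Q z)))"
  have "codebook_mean n (\<lambda>cb. rel_entropy (seqs n) (warden_dist PS W n R RK (code n cb)) (prodn n Q))
      = (\<Sum>z\<in>seqs n. \<Sum>j<Nn n. codebook_mean n (\<lambda>cb. WVZn n (cb ! j) z * ln (output_mixture n cb z / prodn n Q z)))
          / (real (Nn n) * ln 2)"
    unfolding divergence_code by (simp add: iid_expectation_divide iid_expectation_sum finite_seqs)
  also have "\<dots> \<le> (\<Sum>z\<in>seqs n. \<Sum>j<Nn n. ?F z) / (real (Nn n) * ln 2)"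
    by (intro divide_right_mono sum_mono soft_covering_term_le) auto
  also have "\<dots> = (\<Sum>z\<in>seqs n. ?F z) / ln 2"
    using Nn_pos[of n] by (simp add: sum_divide_distrib)
  finally show ?thesis by (simp add: iid_expectation_sum finite_seqs)
qed

lemma ln_normalized_likelihood_le:
  assumes W_pos: "\<And>i. i < n \<Longrightarrow> WVZ (v ! i) (z ! i) > 0"
  shows "ln (WVZn n v z / (real (Nn n) * prodn n Q z))
    \<le> (\<Sum>i<n. ln (WVZ (v ! i) (z ! i)) - ln (Q (z ! i)) - (R + RK) * ln 2) + ln 2"
proof -
  have Zn_pos: "WVZn n v z > 0" unfolding WVZn_def using W_pos by (intro prod_pos) auto
  have N_pos: "real (Nn n) > 0" using Nn_pos[of n] by simp
  have "ln (WVZn n v z / (real (Nn n) * prodn n Q z)) = ln (WVZn n v z) - ln (prodn n Q z) - ln (real (Nn n))"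
    using Zn_pos N_pos prodn_Q_pos[of n z] by (simp add: ln_divide_pos ln_mult_pos)
  moreover have "ln (WVZn n v z) = (\<Sum>i<n. ln (WVZ (v ! i) (z ! i)))"
    unfolding WVZn_def using W_pos by (intro ln_prod) (auto simp: less_imp_neq[symmetric])
  moreover have "ln (prodn n Q z) = (\<Sum>i<n. ln (Q (z ! i)))"
    unfolding prodn_def using Q_pos by (intro ln_prod) (auto simp: less_imp_neq[symmetric])
  ultimately show ?thesis
    using ln_Nn_ge[of n] by (simp add: sum_subtractf sum.distrib algebra_simps)
qed

lemma mean_divergence_le_geometric:
  "\<exists>C \<rho>. 0 \<le> \<rho> \<and> \<rho> < 1 \<and>
     (\<forall>n. codebook_mean n (\<lambda>cb. rel_entropy (seqs n) (warden_dist PS W n R RK (code n cb)) (prodn n Q))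
            \<le> C * \<rho> ^ n)"
proof -
  define p where "p = (\<lambda>(v, z). PV v * WVZ v z)"
  define c where "c = (\<lambda>(v, z). ln (WVZ v z) - ln (Q z) - (R + RK) * ln 2)"
  define F where "F n v z = ln (1 + WVZn n v z / (real (Nn n) * prodn n Q z))" for n v z
  have p_nonneg: "p w \<ge> 0" if "w \<in> V \<times> UNIV" for w
    using that by (auto simp: p_def intro!: mult_nonneg_nonneg PV_nonneg WVZ_nonneg)
  have sum_p: "sum p (V \<times> UNIV) = 1"
    by (simp add: p_def sum.cartesian_product' sum_distrib_left[symmetric] sum_WVZ sum_PV)
  have "(\<Sum>w\<in>V \<times> UNIV. p w * c w) = (\<Sum>v\<in>V. \<Sum>z\<in>UNIV.
      PV v * WVZ v z * (ln (WVZ v z) - ln (Q z)) - (R + RK) * ln 2 * p (v, z))"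
    unfolding sum.cartesian_product' by (intro sum.cong refl) (simp add: p_def c_def algebra_simps)
  also have "\<dots> = ln 2 * IZ - (R + RK) * ln 2 * sum p (V \<times> UNIV)"
    unfolding ln2_IZ sum.cartesian_product' by (simp add: sum_subtractf sum_distrib_left)
  also have "\<dots> < 0" using key_rate sum_p by simp
  finally have neg: "(\<Sum>w\<in>V \<times> UNIV. p w * c w) < 0" .
  have pointwise: "F n (map fst w) (map snd w) \<le> 2 / t * exp (t * (\<Sum>i<n. c (w ! i)))"
    if t: "0 < t" "t \<le> 1" and w: "w \<in> lists_of_length (V \<times> UNIV) n" and pos: "\<forall>i<n. p (w ! i) > 0"
    for t n w
  proof -
    have len: "length w = n" using w by (simp add: lists_of_length_def)
    have v: "fst (w ! i) \<in> V" if "i < n" for i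
      using nth_in_lists_of_length[OF w that] by auto
    have W_pos: "WVZ (map fst w ! i) (map snd w ! i) > 0" if "i < n" for i
      using pos that len PV_nonneg[OF v[OF that]] WVZ_nonneg
      by (auto simp: p_def case_prod_beta zero_less_mult_iff)
    have "WVZn n (map fst w) (map snd w) > 0"
      unfolding WVZn_def using W_pos by (intro prod_pos) auto
    then show ?thesis
      unfolding F_def using t prodn_Q_pos Nn_pos[of n] ln_normalized_likelihood_le[OF W_pos] len
      by (intro ln_one_plus_le_exp) (auto simp: c_def case_prod_beta)
  qed
  obtain t \<rho> where t: "0 < t" and \<rho>: "0 \<le> \<rho>" "\<rho> < 1"
    and decay: "\<And>n. iid_expectation (V \<times> UNIV) p n (\<lambda>w. F n (map fst w) (map snd w)) \<le> 2 / t * \<rho> ^ n"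
    using iid_expectation_exponential_decay[OF _ p_nonneg sum_p neg, of "\<lambda>t. 2 / t"
        "\<lambda>n w. F n (map fst w) (map snd w)"] pointwise finite_V
    by auto
  have "codebook_mean n (\<lambda>cb. rel_entropy (seqs n) (warden_dist PS W n R RK (code n cb)) (prodn n Q))
      \<le> 2 / (t * ln 2) * \<rho> ^ n" for n
  proof -
    have "iid_expectation V PV n (\<lambda>v. \<Sum>z\<in>seqs n. WVZn n v z * F n v z)
        = iid_expectation (V \<times> UNIV) p n (\<lambda>w. F n (map fst w) (map snd w))"
      using iid_expectation_pairs[where A = V and p = PV and B = UNIV and q = WVZ and n = n and g = "F n"]
      by (simp add: seqs_eq_lists_of_length WVZn_def p_def)
    then have "iid_expectation V PV n (\<lambda>v. \<Sum>z\<in>seqs n. WVZn n v z * F n v z) / ln 2 \<le> (2 / t * \<rho> ^ n) / ln 2"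
      using decay[of n] by (intro divide_right_mono) simp_all
    also have "\<dots> = 2 / (t * ln 2) * \<rho> ^ n"
      by simp
    finally show ?thesis
      using mean_divergence_le[of n] by (simp add: F_def)
  qed
  then show ?thesis using \<rho> by blast
qed

subsection \<open>Cost\<close>

lemma exp_cost_code: "exp_cost PS b n R RK (code n cb) = (\<Sum>j<Nn n. avg_cost n (cb ! j)) / real (Nn n)"
  unfolding code_def Nn_def using exp_cost_shannon_code[OF Mn_def Kn_def] by simp

lemma mean_cost_excess_le:
  "codebook_mean n (\<lambda>cb. max 0 (exp_cost PS b n R RK (code n cb) - B))
     \<le> iid_expectation V PV n (\<lambda>v. max 0 (avg_cost n v - B))"
proof -
  let ?N = "real (Nn n)"
  have N: "?N > 0" using Nn_pos[of n] by simp
  have "max 0 (exp_cost PS b n R RK (code n cb) - B) \<le> (\<Sum>j<Nn n. max 0 (avg_cost n (cb ! j) - B)) / ?N" for cb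
  proof -
    have "exp_cost PS b n R RK (code n cb) - B = (\<Sum>j<Nn n. avg_cost n (cb ! j) - B) / ?N"
      unfolding exp_cost_code using N by (simp add: sum_subtractf diff_divide_distrib)
    also have "\<dots> \<le> (\<Sum>j<Nn n. max 0 (avg_cost n (cb ! j) - B)) / ?N"
      using N by (intro divide_right_mono sum_mono) auto
    finally show ?thesis using N by (simp add: sum_nonneg)
  qed
  then have "codebook_mean n (\<lambda>cb. max 0 (exp_cost PS b n R RK (code n cb) - B))
      \<le> codebook_mean n (\<lambda>cb. (\<Sum>j<Nn n. max 0 (avg_cost n (cb ! j) - B)) / ?N)"
    by (intro codebook_mean_mono)
  also have "\<dots> = iid_expectation V PV n (\<lambda>v. max 0 (avg_cost n v - B))"
    using N codebook_mean_codeword[of _ n "\<lambda>v. max 0 (avg_cost n v - B)"]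
    by (simp add: iid_expectation_divide iid_expectation_sum)
  finally show ?thesis .
qed

lemma avg_cost_le:
  assumes "n > 0"
  shows "avg_cost n v \<le> (\<Sum>x\<in>UNIV. b x)"
proof -
  have "cost_of a \<le> (\<Sum>x\<in>UNIV. b x)" for a
  proof -
    have "cost_of a \<le> (\<Sum>s\<in>UNIV. PS s * (\<Sum>x\<in>UNIV. b x))"
      unfolding cost_of_def using b_nonneg
      by (intro sum_mono mult_left_mono PS_nonneg member_le_sum) auto
    then show ?thesis by (simp add: sum_distrib_right[symmetric] sum_PS)
  qed
  then have "(\<Sum>i<n. cost_of (v ! i)) \<le> real n * (\<Sum>x\<in>UNIV. b x)"
    using sum_mono[of "{..<n}" "\<lambda>i. cost_of (v ! i)" "\<lambda>_. \<Sum>x\<in>UNIV. b x"] by simp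
  then show ?thesis using assms by (simp add: avg_cost_def divide_le_eq mult.commute)
qed

lemma cost_excess_le_geometric:
  assumes \<eta>: "\<eta> > 0"
  shows "\<exists>\<rho>. 0 \<le> \<rho> \<and> \<rho> < 1 \<and> (\<forall>n. codebook_mean n (\<lambda>cb. max 0 (exp_cost PS b n R RK (code n cb) - B))
            \<le> \<eta> + (\<Sum>x\<in>UNIV. b x) * \<rho> ^ n)"
proof -
  let ?bmax = "\<Sum>x\<in>UNIV. b x"
  have bmax: "?bmax \<ge> 0" using b_nonneg by (intro sum_nonneg) auto
  define c where "c a = cost_of a - B - \<eta>" for a
  have "(\<Sum>a\<in>V. PV a * c a) = (\<Sum>a\<in>V. PV a * cost_of a - (B + \<eta>) * PV a)"
    by (simp add: c_def algebra_simps)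
  also have "\<dots> = (\<Sum>a\<in>V. PV a * cost_of a) - (B + \<eta>)"
    by (simp add: sum_subtractf sum_distrib_left[symmetric] sum_PV)
  also have "\<dots> < 0"
  proof -
    have "(\<Sum>a\<in>V. PV a * cost_of a) = (\<Sum>v\<in>V. \<Sum>s\<in>UNIV. PV v * PS s * b (xf v s))"
      by (simp add: cost_of_def sum_distrib_left mult.assoc)
    then show ?thesis using mean_cost \<eta> by simp
  qed
  finally have neg: "(\<Sum>a\<in>V. PV a * c a) < 0" .
  have pointwise: "max 0 (avg_cost n v - B) - \<eta> \<le> ?bmax * exp (t * (\<Sum>i<n. c (v ! i)))"
    if t: "0 < t" for t n v
  proof (cases "avg_cost n v \<le> B + \<eta>")
    case True
    then show ?thesis using \<eta> bmax by (auto intro: order_trans[OF _ mult_nonneg_nonneg])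
  next
    case False
    then have n: "n > 0" using B_nonneg \<eta> by (cases n) (auto simp: avg_cost_def)
    with False have "(\<Sum>i<n. cost_of (v ! i)) > real n * (B + \<eta>)"
      by (simp add: avg_cost_def not_le pos_less_divide_eq mult.commute)
    then have "(\<Sum>i<n. c (v ! i)) > 0" by (simp add: c_def sum_subtractf algebra_simps)
    then have "?bmax \<le> ?bmax * exp (t * (\<Sum>i<n. c (v ! i)))"
      using bmax t by (simp add: mult_le_cancel_left1)
    moreover have "max 0 (avg_cost n v - B) \<le> ?bmax"
      using avg_cost_le[OF n, of v] B_nonneg bmax by simp
    ultimately show ?thesis using \<eta> by linarith
  qed
  obtain t \<rho> where \<rho>: "0 \<le> \<rho>" "\<rho> < 1"
    and decay: "\<And>n. iid_expectation V PV n (\<lambda>v. max 0 (avg_cost n v - B) - \<eta>) \<le> ?bmax * \<rho> ^ n"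
    using iid_expectation_exponential_decay[OF finite_V PV_nonneg sum_PV neg, of "\<lambda>_. ?bmax"
        "\<lambda>n v. max 0 (avg_cost n v - B) - \<eta>"] pointwise bmax
    by auto
  have "codebook_mean n (\<lambda>cb. max 0 (exp_cost PS b n R RK (code n cb) - B)) \<le> \<eta> + ?bmax * \<rho> ^ n" for n
    using mean_cost_excess_le[of n] decay[of n]
    by (simp add: iid_expectation_diff iid_expectation_const[OF finite_V sum_PV])
  then show ?thesis using \<rho> by blast
qed

lemma codebook_mean_nonneg:
  "(\<And>cb. cb \<in> lists_of_length (lists_of_length V n) (Nn n) \<Longrightarrow> f cb \<ge> 0) \<Longrightarrow> codebook_mean n f \<ge> 0"
  using codebook_mean_mono[of n "\<lambda>_. 0" f] by (simp add: codebook_mean_const)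

lemma mean_err_prob_tendsto_zero: "(\<lambda>n. codebook_mean n (\<lambda>cb. err_prob PS W n R RK (code n cb))) \<longlonglongrightarrow> 0"
proof (cases "R = 0")
  case True
  then have "Mn n = 1" for n unfolding Mn_def num_msgs_def by simp
  then have "err_prob PS W n R RK (code n cb) = 0" for n cb
    by (simp add: err_prob_code threshold_decoder_def)
  then show ?thesis by (simp add: codebook_mean_const)
next
  case False
  then have \<gamma>: "\<gamma> < IY" "R < \<gamma>" using threshold by auto
  obtain \<rho> where \<rho>: "0 \<le> \<rho>" "\<rho> < 1" "\<And>n. atypicality n \<le> \<rho> ^ n"
    using atypicality_le_geometric[OF \<gamma>(1)] by blast
  have "codebook_mean n (\<lambda>cb. err_prob PS W n R RK (code n cb)) \<le> \<rho> ^ n + (2 powr (R - \<gamma>)) ^ n" for n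
  proof -
    have "real (Mn n - 1) * 2 powr (-(real n * \<gamma>)) \<le> 2 powr (real n * R) * 2 powr (-(real n * \<gamma>))"
      using Mn_le[of n] Mn_pos[of n] by (intro mult_right_mono) (auto simp: of_nat_diff)
    also have "\<dots> = (2 powr (R - \<gamma>)) ^ n"
      by (simp add: powr_add[symmetric] powr_realpow[symmetric] powr_powr algebra_simps)
    finally show ?thesis using mean_err_prob_le[of n] \<rho>(3)[of n] by linarith
  qed
  moreover have "(\<lambda>n. \<rho> ^ n + (2 powr (R - \<gamma>)) ^ n) \<longlonglongrightarrow> 0"
  proof -
    have "2 powr (R - \<gamma>) < 2 powr 0"
      using \<gamma>(2) by (intro powr_less_mono) auto
    then have "(\<lambda>n. \<rho> ^ n + (2 powr (R - \<gamma>)) ^ n) \<longlonglongrightarrow> 0 + 0"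
      using \<rho> by (intro tendsto_add LIMSEQ_power_zero) auto
    then show ?thesis by simp
  qed
  ultimately show ?thesis
    by (intro tendsto_zero_if_nonneg_le[OF codebook_mean_nonneg[OF err_prob_nonneg]])
qed

lemma mean_divergence_tendsto_zero:
  "(\<lambda>n. codebook_mean n (\<lambda>cb. rel_entropy (seqs n) (warden_dist PS W n R RK (code n cb)) (prodn n Q))) \<longlonglongrightarrow> 0"
proof -
  obtain C \<rho> where \<rho>: "0 \<le> \<rho>" "\<rho> < 1" and bound: "\<And>n. codebook_mean n
      (\<lambda>cb. rel_entropy (seqs n) (warden_dist PS W n R RK (code n cb)) (prodn n Q)) \<le> C * \<rho> ^ n"
    using mean_divergence_le_geometric by blast
  have "(\<lambda>n. C * \<rho> ^ n) \<longlonglongrightarrow> C * 0"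
    using \<rho> by (intro tendsto_mult tendsto_const LIMSEQ_power_zero) auto
  then show ?thesis
    by (intro tendsto_zero_if_nonneg_le[OF codebook_mean_nonneg[OF divergence_nonneg] bound]) simp
qed

lemma mean_cost_excess_tendsto_zero:
  "(\<lambda>n. codebook_mean n (\<lambda>cb. max 0 (exp_cost PS b n R RK (code n cb) - B))) \<longlonglongrightarrow> 0"
proof (rule order_tendstoI)
  fix \<epsilon> :: real assume \<epsilon>: "\<epsilon> > 0"
  obtain \<rho> where \<rho>: "0 \<le> \<rho>" "\<rho> < 1" and bound: "\<And>n.
      codebook_mean n (\<lambda>cb. max 0 (exp_cost PS b n R RK (code n cb) - B)) \<le> \<epsilon> / 2 + (\<Sum>x\<in>UNIV. b x) * \<rho> ^ n"
    using cost_excess_le_geometric[of "\<epsilon> / 2"] \<epsilon> by auto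
  have "(\<lambda>n. (\<Sum>x\<in>UNIV. b x) * \<rho> ^ n) \<longlonglongrightarrow> (\<Sum>x\<in>UNIV. b x) * 0"
    using \<rho> by (intro tendsto_mult tendsto_const LIMSEQ_power_zero) auto
  then have "eventually (\<lambda>n. (\<Sum>x\<in>UNIV. b x) * \<rho> ^ n < \<epsilon> / 2) sequentially"
    using \<epsilon> by (intro order_tendstoD(2)) auto
  then show "eventually (\<lambda>n. codebook_mean n (\<lambda>cb. max 0 (exp_cost PS b n R RK (code n cb) - B)) < \<epsilon>) sequentially"
  proof eventually_elim
    case (elim n)
    then show ?case using bound[of n] by linarith
  qed
next
  fix \<epsilon> :: real assume "\<epsilon> < 0"
  moreover have "codebook_mean n (\<lambda>cb. max 0 (exp_cost PS b n R RK (code n cb) - B)) \<ge> 0" for n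
    by (intro codebook_mean_nonneg) auto
  ultimately show "eventually (\<lambda>n. \<epsilon> < codebook_mean n (\<lambda>cb. max 0 (exp_cost PS b n R RK (code n cb) - B))) sequentially"
    by (intro always_eventually allI) (meson le_less_trans not_le)
qed

lemma achievable: "achievable_causal PS W x0 b RK B R"
proof -
  define excess where "excess = (\<lambda>n cb. err_prob PS W n R RK (code n cb)
      + rel_entropy (seqs n) (warden_dist PS W n R RK (code n cb)) (prodn n Q)
      + max 0 (exp_cost PS b n R RK (code n cb) - B))"
  have "\<forall>n. \<exists>cb. excess n cb \<le> codebook_mean n (excess n)"
    using exists_good_codebook by blast
  then obtain cbs where good: "\<And>n. excess n (cbs n) \<le> codebook_mean n (excess n)"
    by metis
  show ?thesis
  proof (rule achievable_causal_if_excess_vanishes[where C = "\<lambda>n. code n (cbs n)"])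
    show "(\<lambda>n. codebook_mean n (excess n)) \<longlonglongrightarrow> 0"
      using tendsto_add[OF tendsto_add[OF mean_err_prob_tendsto_zero mean_divergence_tendsto_zero]
          mean_cost_excess_tendsto_zero]
      by (simp add: excess_def iid_expectation_add)
    show "code_ok (code n (cbs n))" for n
      by (simp add: code_def code_ok_def is_pmf_def)
  qed (use good in \<open>simp_all add: excess_def err_prob_nonneg divergence_nonneg\<close>)
qed

end

lemma (in covert_strategy) achievable_rate:
  assumes "max (IZ - RK) 0 < R" and "R < IY"
  shows "achievable_causal PS W x0 b RK B R"
proof -
  interpret covert_rates PS W x0 b RK B V PV xf R "(R + IY) / 2"
    by unfold_locales (use assms in auto)
  show ?thesis by (rule achievable)
qed

lemma (in covert_strategy) achievable_zero_rate:
  assumes "IZ < RK"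
  shows "achievable_causal PS W x0 b RK B 0"
proof -
  interpret covert_rates PS W x0 b RK B V PV xf 0 0
    by unfold_locales (use assms in auto)
  show ?thesis by (rule achievable)
qed

lemma ereal_le_Sup_if_interval:
  assumes "m < I" and "\<And>R. m < R \<Longrightarrow> R < I \<Longrightarrow> R \<in> S"
  shows "ereal I \<le> Sup (ereal ` S)"
proof (rule dense_le_bounded[of "ereal m"])
  fix w assume w: "ereal m < w" "w < ereal I"
  then obtain r where "w = ereal r" by (cases w) auto
  with w assms(2) show "w \<le> Sup (ereal ` S)" by (auto intro: Sup_upper)
qed (use assms(1) in simp)

theorem theorem2:
  fixes PS :: "'s::finite \<Rightarrow> real"
    and W :: "'s \<Rightarrow> 'x::finite \<Rightarrow> 'y::finite \<Rightarrow> 'z::finite \<Rightarrow> real"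
    and x0 :: 'x and b :: "'x \<Rightarrow> real" and RK B :: real
    and V :: "nat set" and PV :: "nat \<Rightarrow> real" and xf :: "nat \<Rightarrow> 's \<Rightarrow> 'x"
  assumes "is_pmf PS UNIV"
    and "is_channel W"
    and "\<forall>z. Q0 PS W x0 z > 0"
    and "\<forall>x. b x \<ge> 0"
    and "RK \<ge> 0" and "B \<ge> 0"
    and "finite V"
    and "card V \<le> min (card (UNIV :: 'x set) + card (UNIV :: 'y set) + card (UNIV :: 'z set) - 1) ((card (UNIV :: 'x set) - 1) * card (UNIV :: 's set) + 2)"
    and "is_pmf PV V"
    and "\<forall>z. (\<Sum>v\<in>V. PVZ PS W PV xf v z) = Q0 PS W x0 z"
    and "(\<Sum>v\<in>V. \<Sum>s\<in>UNIV. PV v * PS s * b (xf v s)) \<le> B"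
    and "mutual_info V UNIV (PVZ PS W PV xf) - mutual_info V UNIV (PVY PS W PV xf) < RK"
  shows "ereal (mutual_info V UNIV (PVY PS W PV xf)) \<le> covert_capacity_causal PS W x0 b RK B"
proof -
  interpret covert_strategy PS W x0 b RK B V PV xf
    by unfold_locales (use assms in auto)
  show ?thesis
  proof (cases "max (IZ - RK) 0 < IY")
    case True
    then show ?thesis
      unfolding covert_capacity_causal_def
      by (rule ereal_le_Sup_if_interval) (auto intro: achievable_rate)
  next
    case False
    with assms(12) have "IY \<le> 0" and "IZ < RK" by auto
    then have "ereal IY \<le> ereal 0" and "0 \<in> {R. achievable_causal PS W x0 b RK B R}"
      by (auto intro: achievable_zero_rate)
    then show ?thesis
      unfolding covert_capacity_causal_def by (meson Sup_upper image_eqI order_trans)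
  qed
qed

end
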